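(* Let $\langle X\mid R\rangle$ be an $N$-homogeneous presentation with $X$ a finite totally ordered set. (1) For all integers $n\geq0$ and $m\geq l_N(n+2)$, $F_1^{n,m}=S_0^{(m)}\wedge\cdots\wedge S^{(m)}_{m-l_N(n+2)}$. (2) For all integers $n\geq1$ and $m\geq l_N(n+1)$, $F_2^{n,m}=S^{(m)}_{m-l_N(n+1)}\vee\cdots\vee S^{(m)}_{m-N}$.
   Context: $\mathbb{K}$ is a field, $N\geq2$, $X^{(m)}$ words of length $m$, $V=\mathbb{K}X$, $V^{\otimes m}=\mathbb{K}X^{(m)}$; $R\subset V^{\otimes N}$, $\overline R=\mathrm{span}(R)$, $I(R)_j=0$ ($j<N$), $I(R)_j=\sum_{i=0}^{j-N}V^{\otimes i}\otimes\overline R\otimes V^{\otimes j-N-i}$ ($j\geq N$). $X^{(m)}$ is lexicographically ordered, $\mathrm{lm}(f)$ the greatest word in $f\neq0$; elements of $R$ have leading coefficient $1$; a word is a normal form if it has no factor $\mathrm{lm}(f)$, $f\in R$; the presentation is reduced ($\mathrm{lm}(f)-f$ is a combination of normal-form words; $\mathrm{lm}(f)$ has no factor $\mathrm{lm}(g)$, $g\in R\setminus\{f\}$). $S\in\mathrm{End}(V^{\otimes N})$: $S(\mathrm{lm}(f))=\mathrm{lm}(f)-f$, $f\in R$, $S(w)=w$ otherwise (its kernel is $\overline R$). For $m\geq N$ and $0\leq i\leq m-N$, $S_i^{(m)}=\mathrm{id}_{V^{\otimes i}}\otimes S\otimes\mathrm{id}_{V^{\otimes m-N-i}}$. $l_N(2k)=kN$,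 $l_N(2k+1)=kN+1$; $J_1=V$, $J_2=\overline R$, $J_n=\bigcap_{i=0}^{l_N(n)-N}V^{\otimes i}\otimes\overline R\otimes V^{\otimes l_N(n)-N-i}$ ($n\geq3$). A reduction operator relatively to $X^{(m)}$ is a linear projector $T$ of $V^{\otimes m}$ with each $T(w)$ equal to $w$ or a combination of words $<w$; for each subspace $W$ there is a unique one with kernel $W$, $\theta_{X^{(m)}}^{-1}(W)$. Lattice: $T_1\wedge T_2=\theta^{-1}(\ker T_1+\ker T_2)$, $T_1\vee T_2=\theta^{-1}(\ker T_1\cap\ker T_2)$ (associative). For $m\geq l_N(n)$: $F_1^{n,m}=\theta_{X^{(m)}}^{-1}(I(R)_{m-l_N(n)}\otimes V^{\otimes l_N(n)})$; $F_2^{n,m}=\mathrm{id}$ if $m<l_N(n+1)$, else $\theta_{X^{(m)}}^{-1}(V^{\otimes m-l_N(n+1)}\otimes J_{n+1})$. *)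

theory Defs
  imports Main "HOL-Library.List_Lexorder"
begin

text \<open>Words over the alphabet 'a (a finite totally ordered type) are lists; the
  lexicographic order on words of equal length is the order of List_Lexorder.
  An element of V^{\<otimes>m} = K X^{(m)} is a function from words to the field,
  vanishing outside words of length m.\<close>

definition tspace :: "nat \<Rightarrow> ('a list \<Rightarrow> 'k::field) set" where
  "tspace m = {f. \<forall>w. length w \<noteq> m \<longrightarrow> f w = 0}"

definition wd :: "'a list \<Rightarrow> 'a list \<Rightarrow> 'k::field" where
  "wd w = (\<lambda>v. if v = w then 1 else 0)"

definition lin_span :: "('a list \<Rightarrow> 'k::field) set \<Rightarrow> ('a list \<Rightarrow> 'k) set" where
  "lin_span S = {f. \<exists>B c. finite B \<and> B \<subseteq> S \<and> f = (\<lambda>v. \<Sum>b\<in>B. c b * b v)}"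

definition subsp_sum :: "('a list \<Rightarrow> 'k::field) set \<Rightarrow> ('a list \<Rightarrow> 'k) set \<Rightarrow> ('a list \<Rightarrow> 'k) set" where
  "subsp_sum W1 W2 = {(\<lambda>v. a v + b v) | a b. a \<in> W1 \<and> b \<in> W2}"

definition tens :: "nat \<Rightarrow> ('a list \<Rightarrow> 'k::field) \<Rightarrow> ('a list \<Rightarrow> 'k) \<Rightarrow> 'a list \<Rightarrow> 'k" where
  "tens a f g = (\<lambda>w. f (take a w) * g (drop a w))"

definition tensp :: "nat \<Rightarrow> ('a list \<Rightarrow> 'k::field) set \<Rightarrow> ('a list \<Rightarrow> 'k) set \<Rightarrow> ('a list \<Rightarrow> 'k) set" where
  "tensp a W1 W2 = lin_span {tens a f g | f g. f \<in> W1 \<and> g \<in> W2}"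

definition lm :: "('a::linorder list \<Rightarrow> 'k::field) \<Rightarrow> 'a list" where
  "lm f = Max {w. f w \<noteq> 0}"

definition is_factor :: "'a list \<Rightarrow> 'a list \<Rightarrow> bool" where
  "is_factor u w \<longleftrightarrow> (\<exists>p s. w = p @ u @ s)"

definition normal_form :: "('a::linorder list \<Rightarrow> 'k::field) set \<Rightarrow> 'a list \<Rightarrow> bool" where
  "normal_form R w \<longleftrightarrow> (\<forall>f\<in>R. \<not> is_factor (lm f) w)"

definition reduced_hom_pres :: "nat \<Rightarrow> ('a::linorder list \<Rightarrow> 'k::field) set \<Rightarrow> bool" where
  "reduced_hom_pres N R \<longleftrightarrow> N \<ge> 2 \<and> R \<subseteq> tspace N \<and>
     (\<forall>f\<in>R. f \<noteq> (\<lambda>_. 0) \<and> f (lm f) = 1 \<and>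
        (\<forall>v. v \<noteq> lm f \<longrightarrow> f v \<noteq> 0 \<longrightarrow> normal_form R v) \<and>
        (\<forall>g\<in>R. g \<noteq> f \<longrightarrow> \<not> is_factor (lm g) (lm f)))"

definition lin_ext :: "nat \<Rightarrow> ('a list \<Rightarrow> 'a list \<Rightarrow> 'k::field) \<Rightarrow> ('a list \<Rightarrow> 'k) \<Rightarrow> 'a list \<Rightarrow> 'k" where
  "lin_ext m img f = (\<lambda>v. \<Sum>w\<in>{w. length w = m}. f w * img w v)"

definition S_img :: "('a::linorder list \<Rightarrow> 'k::field) set \<Rightarrow> 'a list \<Rightarrow> 'a list \<Rightarrow> 'k" where
  "S_img R w = (if \<exists>f\<in>R. lm f = w
                then (\<lambda>v. wd w v - (THE f. f \<in> R \<and> lm f = w) v) else wd w)"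

definition S_op :: "nat \<Rightarrow> ('a::linorder list \<Rightarrow> 'k::field) set \<Rightarrow> ('a list \<Rightarrow> 'k) \<Rightarrow> 'a list \<Rightarrow> 'k" where
  "S_op N R = lin_ext N (S_img R)"

text \<open>S_i^{(m)} = id_{V^{\<otimes>i}} \<otimes> S \<otimes> id_{V^{\<otimes>m-N-i}}.\<close>
definition S_i :: "nat \<Rightarrow> ('a::linorder list \<Rightarrow> 'k::field) set \<Rightarrow> nat \<Rightarrow> nat \<Rightarrow> ('a list \<Rightarrow> 'k) \<Rightarrow> 'a list \<Rightarrow> 'k" where
  "S_i N R m i = lin_ext m (\<lambda>w. tens i (wd (take i w))
        (tens N (S_img R (take N (drop i w))) (wd (drop (i + N) w))))"

definition kerop :: "nat \<Rightarrow> (('a list \<Rightarrow> 'k::field) \<Rightarrow> 'a list \<Rightarrow> 'k) \<Rightarrow> ('a list \<Rightarrow> 'k) set" where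
  "kerop m T = {f \<in> tspace m. T f = (\<lambda>_. 0)}"

definition is_red_op :: "nat \<Rightarrow> (('a::linorder list \<Rightarrow> 'k::field) \<Rightarrow> 'a list \<Rightarrow> 'k) \<Rightarrow> bool" where
  "is_red_op m T \<longleftrightarrow>
     (\<forall>f\<in>tspace m. T f \<in> tspace m) \<and>
     (\<forall>f\<in>tspace m. \<forall>g\<in>tspace m. T (\<lambda>v. f v + g v) = (\<lambda>v. T f v + T g v)) \<and>
     (\<forall>c. \<forall>f\<in>tspace m. T (\<lambda>v. c * f v) = (\<lambda>v. c * T f v)) \<and>
     (\<forall>f\<in>tspace m. T (T f) = T f) \<and>
     (\<forall>w. length w = m \<longrightarrow>
        T (wd w) = wd w \<or> (\<forall>v. T (wd w) v \<noteq> 0 \<longrightarrow> v < w))"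

text \<open>theta^{-1}: the reduction operator with kernel W (unique on V^{\<otimes>m}).\<close>
definition theta_inv :: "nat \<Rightarrow> ('a::linorder list \<Rightarrow> 'k::field) set \<Rightarrow> ('a list \<Rightarrow> 'k) \<Rightarrow> 'a list \<Rightarrow> 'k" where
  "theta_inv m W = (SOME T. is_red_op m T \<and> kerop m T = W)"

definition red_meet :: "nat \<Rightarrow> (('a::linorder list \<Rightarrow> 'k::field) \<Rightarrow> 'a list \<Rightarrow> 'k)
    \<Rightarrow> (('a list \<Rightarrow> 'k) \<Rightarrow> 'a list \<Rightarrow> 'k) \<Rightarrow> ('a list \<Rightarrow> 'k) \<Rightarrow> 'a list \<Rightarrow> 'k" where
  "red_meet m T1 T2 = theta_inv m (subsp_sum (kerop m T1) (kerop m T2))"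

definition red_join :: "nat \<Rightarrow> (('a::linorder list \<Rightarrow> 'k::field) \<Rightarrow> 'a list \<Rightarrow> 'k)
    \<Rightarrow> (('a list \<Rightarrow> 'k) \<Rightarrow> 'a list \<Rightarrow> 'k) \<Rightarrow> ('a list \<Rightarrow> 'k) \<Rightarrow> 'a list \<Rightarrow> 'k" where
  "red_join m T1 T2 = theta_inv m (kerop m T1 \<inter> kerop m T2)"

text \<open>Iterated meet/join T_1 \<and> ... \<and> T_k of a nonempty list (the empty case is unused).\<close>
fun big_meet :: "nat \<Rightarrow> ((('a::linorder list \<Rightarrow> 'k::field) \<Rightarrow> 'a list \<Rightarrow> 'k)) list
    \<Rightarrow> ('a list \<Rightarrow> 'k) \<Rightarrow> 'a list \<Rightarrow> 'k" where
  "big_meet m [] = id"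
| "big_meet m [T] = T"
| "big_meet m (T # Ts) = red_meet m T (big_meet m Ts)"

fun big_join :: "nat \<Rightarrow> ((('a::linorder list \<Rightarrow> 'k::field) \<Rightarrow> 'a list \<Rightarrow> 'k)) list
    \<Rightarrow> ('a list \<Rightarrow> 'k) \<Rightarrow> 'a list \<Rightarrow> 'k" where
  "big_join m [] = id"
| "big_join m [T] = T"
| "big_join m (T # Ts) = red_join m T (big_join m Ts)"

definition lN :: "nat \<Rightarrow> nat \<Rightarrow> nat" where
  "lN N n = (if even n then (n div 2) * N else (n div 2) * N + 1)"

text \<open>Degree j component of the two-sided ideal I(R).\<close>
definition IR :: "nat \<Rightarrow> ('a list \<Rightarrow> 'k::field) set \<Rightarrow> nat \<Rightarrow> ('a list \<Rightarrow> 'k) set" where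
  "IR N R j = (if j < N then {(\<lambda>_. 0)}
     else lin_span (\<Union>i\<in>{0..j - N}. tensp i (tspace i) (tensp N (lin_span R) (tspace (j - N - i)))))"

definition J :: "nat \<Rightarrow> ('a list \<Rightarrow> 'k::field) set \<Rightarrow> nat \<Rightarrow> ('a list \<Rightarrow> 'k) set" where
  "J N R n = (if n = 1 then tspace 1 else if n = 2 then lin_span R
     else (\<Inter>i\<in>{0..lN N n - N}. tensp i (tspace i) (tensp N (lin_span R) (tspace (lN N n - N - i)))))"

definition F1 :: "nat \<Rightarrow> ('a::linorder list \<Rightarrow> 'k::field) set \<Rightarrow> nat \<Rightarrow> nat \<Rightarrow> ('a list \<Rightarrow> 'k) \<Rightarrow> 'a list \<Rightarrow> 'k" where
  "F1 N R n m = theta_inv m (tensp (m - lN N n) (IR N R (m - lN N n)) (tspace (lN N n)))"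

definition F2 :: "nat \<Rightarrow> ('a::linorder list \<Rightarrow> 'k::field) set \<Rightarrow> nat \<Rightarrow> nat \<Rightarrow> ('a list \<Rightarrow> 'k) \<Rightarrow> 'a list \<Rightarrow> 'k" where
  "F2 N R n m = (if m < lN N (n + 1) then id
     else theta_inv m (tensp (m - lN N (n + 1)) (tspace (m - lN N (n + 1))) (J N R (n + 1))))"

end

theory Submission
  imports Defs
begin

text \<open>A reduction operator is determined by its kernel, so both identities are statements about
  kernels. The kernel of S_i^{(m)} is V^{\<otimes>i} \<otimes> span(R) \<otimes> V^{\<otimes>m-N-i}, the kernel of a
  meet is the sum and that of a join the intersection of the kernels. Writing
  V^{\<otimes>i} \<otimes> X \<otimes> V^{\<otimes>k} as the space of vectors f all of whose slices x \<mapsto> f(u x z)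
  with |u| = i lie in X, tensoring with V^{\<otimes>l} on either side just shifts i, and slicing commutes
  with sums and intersections. Hence I(R)_{m-l_N(n)} \<otimes> V^{\<otimes>l_N(n)} is the sum of the kernels of
  S_0^{(m)}, ..., S_{m-l_N(n+2)}^{(m)}, and V^{\<otimes>m-l_N(n+1)} \<otimes> J_{n+1} is the intersection of the
  kernels of S_{m-l_N(n+1)}^{(m)}, ..., S_{m-N}^{(m)}.\<close>

section \<open>Subspaces and linear spans\<close>

definition lin_closed :: "('a list \<Rightarrow> 'k::field) set \<Rightarrow> bool" where
  "lin_closed W \<longleftrightarrow> (\<lambda>_. 0) \<in> W \<and> (\<forall>f\<in>W. \<forall>g\<in>W. (\<lambda>v. f v + g v) \<in> W) \<and> (\<forall>c. \<forall>f\<in>W. (\<lambda>v. c * f v) \<in> W)"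

definition tsubspace :: "nat \<Rightarrow> ('a list \<Rightarrow> 'k::field) set \<Rightarrow> bool" where
  "tsubspace m W \<longleftrightarrow> lin_closed W \<and> W \<subseteq> tspace m"

lemma lin_closed_zero: "lin_closed W \<Longrightarrow> (\<lambda>_. 0) \<in> W"
  by (simp add: lin_closed_def)

lemma lin_closed_add: "lin_closed W \<Longrightarrow> f \<in> W \<Longrightarrow> g \<in> W \<Longrightarrow> (\<lambda>v. f v + g v) \<in> W"
  by (simp add: lin_closed_def)

lemma lin_closed_smult: "lin_closed W \<Longrightarrow> f \<in> W \<Longrightarrow> (\<lambda>v. c * f v) \<in> W"
  by (simp add: lin_closed_def)

lemma lin_closed_diff: "lin_closed W \<Longrightarrow> f \<in> W \<Longrightarrow> g \<in> W \<Longrightarrow> (\<lambda>v. f v - g v) \<in> W"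
  using lin_closed_add[of W f "\<lambda>v. (-1) * g v"] lin_closed_smult[of W g "-1"] by simp

lemma lin_closed_sum:
  assumes "lin_closed W"
  shows "finite A \<Longrightarrow> (\<forall>a\<in>A. F a \<in> W) \<Longrightarrow> (\<lambda>v. \<Sum>a\<in>A. F a v) \<in> W"
proof (induction A rule: finite_induct)
  case empty
  thus ?case using assms by (simp add: lin_closed_zero)
next
  case (insert x A)
  have "(\<lambda>v. F x v + (\<Sum>a\<in>A. F a v)) \<in> W"
    using insert assms by (intro lin_closed_add) auto
  thus ?case using insert by simp
qed

lemma lin_closed_tspace: "lin_closed (tspace m)"
  by (auto simp: lin_closed_def tspace_def)

lemma tsubspace_imp_tspace: "tsubspace m W \<Longrightarrow> f \<in> W \<Longrightarrow> f \<in> tspace m"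
  by (auto simp: tsubspace_def)

lemma lin_span_superset: "S \<subseteq> lin_span S"
proof
  fix s assume "s \<in> S"
  thus "s \<in> lin_span S" unfolding lin_span_def
    by (intro CollectI exI[of _ "{s}"] exI[of _ "\<lambda>_. 1"]) auto
qed

lemma lin_closed_lin_span: "lin_closed (lin_span S)"
  unfolding lin_closed_def
proof (intro conjI ballI allI)
  show "(\<lambda>_. 0) \<in> lin_span S" unfolding lin_span_def
    by (intro CollectI exI[of _ "{}"]) auto
next
  fix f g assume "f \<in> lin_span S" "g \<in> lin_span S"
  then obtain B1 c1 B2 c2 where b1: "finite B1" "B1 \<subseteq> S" "f = (\<lambda>v. \<Sum>b\<in>B1. c1 b * b v)"
    and b2: "finite B2" "B2 \<subseteq> S" "g = (\<lambda>v. \<Sum>b\<in>B2. c2 b * b v)"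
    unfolding lin_span_def by auto
  define c where "c b = (if b \<in> B1 then c1 b else 0) + (if b \<in> B2 then c2 b else 0)" for b
  have "f v + g v = (\<Sum>b\<in>B1 \<union> B2. c b * b v)" for v
  proof -
    have "(\<Sum>b\<in>B1 \<union> B2. c b * b v) = (\<Sum>b\<in>B1 \<union> B2. if b \<in> B1 then c1 b * b v else 0)
        + (\<Sum>b\<in>B1 \<union> B2. if b \<in> B2 then c2 b * b v else 0)"
      unfolding sum.distrib[symmetric] by (intro sum.cong) (auto simp: c_def distrib_right)
    also have "\<dots> = f v + g v"
      using b1 b2 by (simp add: sum.inter_restrict[symmetric] Int_absorb1 Int_absorb2)
    finally show ?thesis by simp
  qed
  thus "(\<lambda>v. f v + g v) \<in> lin_span S" unfolding lin_span_def using b1 b2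
    by (intro CollectI exI[of _ "B1 \<union> B2"] exI[of _ c]) auto
next
  fix a f assume "f \<in> lin_span S"
  then obtain B c where b: "finite B" "B \<subseteq> S" "f = (\<lambda>v. \<Sum>b\<in>B. c b * b v)"
    unfolding lin_span_def by auto
  have "(\<lambda>v. a * f v) = (\<lambda>v. \<Sum>b\<in>B. (a * c b) * b v)"
    using b by (simp add: sum_distrib_left mult.assoc)
  thus "(\<lambda>v. a * f v) \<in> lin_span S" unfolding lin_span_def using b
    by (intro CollectI exI[of _ B] exI[of _ "\<lambda>b. a * c b"]) auto
qed

lemma lin_span_least: "lin_closed T \<Longrightarrow> S \<subseteq> T \<Longrightarrow> lin_span S \<subseteq> T"
proof
  fix f assume T: "lin_closed T" "S \<subseteq> T" and "f \<in> lin_span S"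
  then obtain B c where b: "finite B" "B \<subseteq> S" "f = (\<lambda>v. \<Sum>b\<in>B. c b * b v)"
    unfolding lin_span_def by auto
  have "(\<lambda>v. \<Sum>b\<in>B. c b * b v) \<in> T"
    using b T by (intro lin_closed_sum) (auto intro: lin_closed_smult)
  thus "f \<in> T" using b by simp
qed

lemma lin_span_eq: "lin_closed W \<Longrightarrow> lin_span W = W"
  using lin_span_least lin_span_superset by blast

lemma lin_span_mono: "S \<subseteq> T \<Longrightarrow> lin_span S \<subseteq> lin_span T"
  by (meson lin_closed_lin_span lin_span_least lin_span_superset order_trans)

lemma tsubspace_lin_span: "S \<subseteq> tspace m \<Longrightarrow> tsubspace m (lin_span S)"
  by (simp add: tsubspace_def lin_closed_lin_span lin_span_least lin_closed_tspace)

lemma finite_words_length: "finite {w::'a::finite list. length w = m}"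
  using finite_lists_length_eq[of "UNIV::'a set" m] by simp

lemma tspace_sum_wd:
  assumes "f \<in> tspace m"
  shows "(\<Sum>x\<in>{w::'a::finite list. length w = m}. f x * wd x y) = (f y :: 'k::field)"
proof -
  have "(\<Sum>x\<in>{w::'a list. length w = m}. f x * wd x y)
      = (\<Sum>x\<in>{w::'a list. length w = m}. if y = x then f x else 0)"
    by (intro sum.cong) (auto simp: wd_def)
  also have "\<dots> = f y" using assms by (auto simp: finite_words_length tspace_def)
  finally show ?thesis .
qed

lemma tspace_length: "f \<in> tspace m \<Longrightarrow> f v \<noteq> 0 \<Longrightarrow> length v = m"
  by (auto simp: tspace_def)

lemma wd_tspace: "length w = m \<Longrightarrow> wd w \<in> tspace m"
  by (auto simp: tspace_def wd_def)

lemma finite_support: "f \<in> tspace m \<Longrightarrow> finite {v::'a::finite list. f v \<noteq> 0}"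
  by (rule finite_subset[OF _ finite_words_length[of m]]) (auto simp: tspace_def)

lemma exists_top_word:
  fixes f :: "'a::{finite,linorder} list \<Rightarrow> 'k::field"
  assumes "f \<in> tspace m" "f v \<noteq> 0"
  obtains w where "f w \<noteq> 0" "length w = m" "\<And>u. f u \<noteq> 0 \<Longrightarrow> u \<le> w"
  using Max_in[OF finite_support[OF assms(1)]] Max_ge[OF finite_support[OF assms(1)]]
    tspace_length[OF assms(1)] assms(2) by blast

lemma exists_word_above_length:
  "\<exists>B :: 'a::{finite,linorder} list. \<forall>v. length v = m \<longrightarrow> v < B"
proof (intro exI allI impI)
  let ?M = "Max {w::'a list. length w = m}"
  fix v :: "'a list" assume "length v = m"
  hence "v \<le> ?M" using finite_words_length by (intro Max_ge) auto
  also have "?M < ?M @ [undefined]" by (simp add: list_less_def lexord_append_rightI)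
  finally show "v < ?M @ [undefined]" .
qed

section \<open>Reduction operators are determined by their kernels\<close>

lemma red_tspace: "is_red_op m T \<Longrightarrow> f \<in> tspace m \<Longrightarrow> T f \<in> tspace m"
  by (simp add: is_red_op_def)

lemma red_add: "is_red_op m T \<Longrightarrow> f \<in> tspace m \<Longrightarrow> g \<in> tspace m \<Longrightarrow> T (\<lambda>v. f v + g v) = (\<lambda>v. T f v + T g v)"
  by (simp add: is_red_op_def)

lemma red_smult: "is_red_op m T \<Longrightarrow> f \<in> tspace m \<Longrightarrow> T (\<lambda>v. c * f v) = (\<lambda>v. c * T f v)"
  by (simp add: is_red_op_def)

lemma red_idem: "is_red_op m T \<Longrightarrow> f \<in> tspace m \<Longrightarrow> T (T f) = T f"
  by (simp add: is_red_op_def)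

lemma red_triangular: "is_red_op m T \<Longrightarrow> length w = m \<Longrightarrow>
    T (wd w) = wd w \<or> (\<forall>v. T (wd w) v \<noteq> 0 \<longrightarrow> v < w)"
  by (simp add: is_red_op_def)

lemma red_zero: assumes "is_red_op m T" shows "T (\<lambda>_. 0) = (\<lambda>_. 0)"
  using red_smult[OF assms lin_closed_zero[OF lin_closed_tspace], of 0] by simp

lemma red_diff:
  assumes T: "is_red_op m T" and f: "f \<in> tspace m" and g: "g \<in> tspace m"
  shows "T (\<lambda>v. f v - g v) = (\<lambda>v. T f v - T g v)"
proof -
  have "(\<lambda>v. (-1) * g v) \<in> tspace m" using g by (rule lin_closed_smult[OF lin_closed_tspace])
  thus ?thesis using red_add[OF T f, of "\<lambda>v. (-1) * g v"] red_smult[OF T g, of "-1"] by simp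
qed

lemma red_sum:
  assumes T: "is_red_op m T"
  shows "finite A \<Longrightarrow> (\<forall>a\<in>A. F a \<in> tspace m) \<Longrightarrow> T (\<lambda>v. \<Sum>a\<in>A. F a v) = (\<lambda>v. \<Sum>a\<in>A. T (F a) v)"
proof (induction A rule: finite_induct)
  case empty
  thus ?case using red_zero[OF T] by simp
next
  case (insert x A)
  have "(\<lambda>v. \<Sum>a\<in>A. F a v) \<in> tspace m"
    using insert by (intro lin_closed_sum[OF lin_closed_tspace]) auto
  thus ?case using insert red_add[OF T, of "F x" "\<lambda>v. \<Sum>a\<in>A. F a v"] by simp
qed

lemma red_apply_eq_sum:
  fixes T :: "('a::{finite,linorder} list \<Rightarrow> 'k::field) \<Rightarrow> 'a list \<Rightarrow> 'k"
  assumes T: "is_red_op m T" and f: "f \<in> tspace m"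
  shows "T f u = (\<Sum>v\<in>{w. length w = m}. f v * T (wd v) u)"
proof -
  have "T f = T (\<lambda>u. \<Sum>v\<in>{w. length w = m}. f v * wd v u)"
    using tspace_sum_wd[OF f] by presburger
  also have "\<dots> = (\<lambda>u. \<Sum>v\<in>{w. length w = m}. T (\<lambda>u. f v * wd v u) u)"
    by (rule red_sum[OF T finite_words_length])
      (auto intro: lin_closed_smult[OF lin_closed_tspace wd_tspace])
  finally show ?thesis using red_smult[OF T wd_tspace] by simp
qed

lemma tsubspace_kerop:
  assumes T: "is_red_op m T"
  shows "tsubspace m (kerop m T)"
  unfolding tsubspace_def lin_closed_def
proof (intro conjI ballI allI)
  show "(\<lambda>_. 0) \<in> kerop m T"
    using red_zero[OF T] lin_closed_zero[OF lin_closed_tspace] by (simp add: kerop_def)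
next
  fix f g assume "f \<in> kerop m T" "g \<in> kerop m T"
  thus "(\<lambda>v. f v + g v) \<in> kerop m T"
    using red_add[OF T, of f g] lin_closed_add[OF lin_closed_tspace, of f m g]
    by (simp add: kerop_def)
next
  fix c f assume "f \<in> kerop m T"
  thus "(\<lambda>v. c * f v) \<in> kerop m T"
    using red_smult[OF T, of f c] lin_closed_smult[OF lin_closed_tspace, of f m c]
    by (simp add: kerop_def)
qed (auto simp: kerop_def)

lemma red_residual_in_kerop: "is_red_op m T \<Longrightarrow> f \<in> tspace m \<Longrightarrow> (\<lambda>v. f v - T f v) \<in> kerop m T"
  unfolding kerop_def
  using red_diff[of m T f "T f"] red_tspace[of m T f] red_idem[of m T f]
    lin_closed_diff[OF lin_closed_tspace] by auto

lemma red_wd_less: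
  assumes T: "is_red_op m T" and "length v = m" "v < w"
  shows "T (wd v) w = 0"
proof (cases "T (wd v) = wd v")
  case True
  thus ?thesis using assms(3) by (simp add: wd_def)
next
  case False
  thus ?thesis using red_triangular[OF T assms(2)] assms(3) less_asym by blast
qed

lemma red_wd_diag:
  assumes T: "is_red_op m T" and "length w = m" "T (wd w) \<noteq> wd w"
  shows "T (wd w) w = 0"
  using red_triangular[OF T assms(2)] assms(3) by blast

text \<open>The leading words of W form the set lm(W) of the paper; a reduction operator with kernel
  W fixes exactly the other words.\<close>

definition is_leading_word :: "('a::linorder list \<Rightarrow> 'k::field) set \<Rightarrow> 'a list \<Rightarrow> bool" where
  "is_leading_word W w \<longleftrightarrow> (\<exists>h\<in>W. h w \<noteq> 0 \<and> (\<forall>v. h v \<noteq> 0 \<longrightarrow> v \<le> w))"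

lemma red_fixed_not_leading:
  fixes T :: "('a::{finite,linorder} list \<Rightarrow> 'k::field) \<Rightarrow> 'a list \<Rightarrow> 'k"
  assumes T: "is_red_op m T" and w: "length w = m" "T (wd w) = wd w"
  shows "\<not> is_leading_word (kerop m T) w"
proof
  assume "is_leading_word (kerop m T) w"
  then obtain h where h: "h \<in> kerop m T" "h w \<noteq> 0" "\<forall>v. h v \<noteq> 0 \<longrightarrow> v \<le> w"
    unfolding is_leading_word_def by blast
  have ht: "h \<in> tspace m" "T h = (\<lambda>_. 0)" using h(1) by (auto simp: kerop_def)
  have "T h w = (\<Sum>v\<in>{u. length u = m}. if v = w then h w else 0)"
    unfolding red_apply_eq_sum[OF T ht(1)]
  proof (intro sum.cong refl)
    fix v :: "'a list" assume "v \<in> {u. length u = m}"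
    moreover have "h v = 0 \<or> v < w" if "v \<noteq> w" using h(3) that by force
    ultimately show "h v * T (wd v) w = (if v = w then h w else 0)"
      using w red_wd_less[OF T, of v w] by (auto simp: wd_def)
  qed
  also have "\<dots> = h w" using w(1) by (simp add: finite_words_length)
  finally show False using ht(2) h(2) by simp
qed

text \<open>The support of a fixed vector T g = g consists of words fixed by T: otherwise its
  greatest non-fixed support word would survive in T g with coefficient 0.\<close>

lemma red_fixed_support:
  fixes T :: "('a::{finite,linorder} list \<Rightarrow> 'k::field) \<Rightarrow> 'a list \<Rightarrow> 'k"
  assumes T: "is_red_op m T" and g: "g \<in> tspace m" "T g = g" and gw: "g w \<noteq> 0"
  shows "T (wd w) = wd w"
proof (rule ccontr)
  assume nw: "T (wd w) \<noteq> wd w"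
  let ?B = "{w. g w \<noteq> 0 \<and> T (wd w) \<noteq> wd w}"
  have finB: "finite ?B" using finite_support[OF g(1)] by (rule finite_subset[rotated]) auto
  define w0 where "w0 = Max ?B"
  have "w0 \<in> ?B" unfolding w0_def using finB nw gw by (intro Max_in) auto
  hence w0: "g w0 \<noteq> 0" "T (wd w0) \<noteq> wd w0" "length w0 = m"
    using tspace_length[OF g(1)] by auto
  have "T g w0 = (\<Sum>v\<in>{u. length u = m}. g v * T (wd v) w0)" by (rule red_apply_eq_sum[OF T g(1)])
  also have "\<dots> = 0"
  proof (intro sum.neutral ballI)
    fix v :: "'a list" assume v: "v \<in> {u. length u = m}"
    show "g v * T (wd v) w0 = 0"
    proof (cases v w0 rule: linorder_cases)
      case less
      thus ?thesis using red_wd_less[OF T, of v w0] v by simp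
    next
      case equal
      thus ?thesis using red_wd_diag[OF T w0(3) w0(2)] by simp
    next
      case greater
      show ?thesis
      proof (cases "g v = 0")
        case False
        hence "T (wd v) = wd v" using greater Max_ge[OF finB] unfolding w0_def by force
        thus ?thesis using greater by (auto simp: wd_def)
      qed simp
    qed
  qed
  finally show False using g(2) w0(1) by simp
qed

text \<open>The greatest word in the support of T1 f - T2 f is leading for the common kernel, yet it
  lies in the support of T1 f or of T2 f and hence is fixed by T1 or T2.\<close>

theorem red_op_unique:
  fixes T1 :: "('a::{finite,linorder} list \<Rightarrow> 'k::field) \<Rightarrow> 'a list \<Rightarrow> 'k"
  assumes T1: "is_red_op m T1" and T2: "is_red_op m T2" and K: "kerop m T1 = kerop m T2"
    and f: "f \<in> tspace m"
  shows "T1 f = T2 f"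
proof (rule ccontr)
  assume "T1 f \<noteq> T2 f"
  define d where "d = (\<lambda>v. T1 f v - T2 f v)"
  have Kc: "lin_closed (kerop m T1)" using tsubspace_kerop[OF T1] by (simp add: tsubspace_def)
  have r2: "(\<lambda>v. f v - T2 f v) \<in> kerop m T1" using red_residual_in_kerop[OF T2 f] K by simp
  have "(\<lambda>v. (\<lambda>v. f v - T2 f v) v - (\<lambda>v. f v - T1 f v) v) \<in> kerop m T1"
    by (rule lin_closed_diff[OF Kc r2 red_residual_in_kerop[OF T1 f]])
  moreover have "(\<lambda>v. (\<lambda>v. f v - T2 f v) v - (\<lambda>v. f v - T1 f v) v) = d"
    unfolding d_def by (rule ext) simp
  ultimately have dK: "d \<in> kerop m T1" by simp
  hence dt: "d \<in> tspace m" by (simp add: kerop_def)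
  have "\<exists>v. d v \<noteq> 0" using \<open>T1 f \<noteq> T2 f\<close> unfolding d_def by (auto simp: fun_eq_iff)
  then obtain v where "d v \<noteq> 0" by blast
  then obtain w where w: "d w \<noteq> 0" "length w = m" "\<And>u. d u \<noteq> 0 \<Longrightarrow> u \<le> w"
    using exists_top_word[OF dt] by blast
  have "is_leading_word (kerop m T1) w"
    unfolding is_leading_word_def using dK w by blast
  moreover have "T1 f w \<noteq> 0 \<or> T2 f w \<noteq> 0" using w(1) unfolding d_def by auto
  hence "T1 (wd w) = wd w \<or> T2 (wd w) = wd w"
    using red_fixed_support[OF T1 red_tspace[OF T1 f] red_idem[OF T1 f]]
      red_fixed_support[OF T2 red_tspace[OF T2 f] red_idem[OF T2 f]] by blast
  ultimately show False
    using red_fixed_not_leading[OF T1 w(2)] red_fixed_not_leading[OF T2 w(2)] K by metis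
qed

section \<open>Existence of the reduction operator with a given kernel\<close>

text \<open>The reduction operator with kernel W is the projection along W onto the span of the words
  that are not leading words of W.\<close>

definition nf_space :: "nat \<Rightarrow> ('a::linorder list \<Rightarrow> 'k::field) set \<Rightarrow> ('a list \<Rightarrow> 'k) set" where
  "nf_space m W = {p \<in> tspace m. \<forall>v. p v \<noteq> 0 \<longrightarrow> \<not> is_leading_word W v}"

definition nf_proj :: "nat \<Rightarrow> ('a::linorder list \<Rightarrow> 'k::field) set \<Rightarrow> ('a list \<Rightarrow> 'k) \<Rightarrow> 'a list \<Rightarrow> 'k" where
  "nf_proj m W g = (THE p. p \<in> nf_space m W \<and> (\<lambda>v. g v - p v) \<in> W)"

lemma lin_closed_nf_space: "lin_closed (nf_space m W)"
  unfolding lin_closed_def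
proof (intro conjI ballI allI)
  show "(\<lambda>_. 0) \<in> nf_space m W" by (simp add: nf_space_def tspace_def)
next
  fix f g assume f: "f \<in> nf_space m W" and g: "g \<in> nf_space m W"
  have "(\<lambda>v. f v + g v) \<in> tspace m"
    using f g by (intro lin_closed_add[OF lin_closed_tspace]) (simp_all add: nf_space_def)
  moreover have "\<not> is_leading_word W v" if "f v + g v \<noteq> 0" for v
  proof -
    have "f v \<noteq> 0 \<or> g v \<noteq> 0" using that by auto
    thus ?thesis using f g by (auto simp: nf_space_def)
  qed
  ultimately show "(\<lambda>v. f v + g v) \<in> nf_space m W" by (simp add: nf_space_def)
next
  fix c f assume f: "f \<in> nf_space m W"
  hence "(\<lambda>v. c * f v) \<in> tspace m"
    by (intro lin_closed_smult[OF lin_closed_tspace]) (simp add: nf_space_def)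
  thus "(\<lambda>v. c * f v) \<in> nf_space m W" using f by (simp add: nf_space_def)
qed

lemma nf_space_tspace: "p \<in> nf_space m W \<Longrightarrow> p \<in> tspace m"
  by (simp add: nf_space_def)

lemma nf_space_Int_eq_zero:
  fixes p :: "'a::{finite,linorder} list \<Rightarrow> 'k::field"
  assumes "p \<in> nf_space m W" "p \<in> W"
  shows "p = (\<lambda>_. 0)"
proof (rule ccontr)
  assume "p \<noteq> (\<lambda>_. 0)"
  then obtain v where "p v \<noteq> 0" by auto
  then obtain w where "p w \<noteq> 0" "\<And>u. p u \<noteq> 0 \<Longrightarrow> u \<le> w"
    using exists_top_word[OF nf_space_tspace[OF assms(1)]] by metis
  thus False using assms unfolding nf_space_def is_leading_word_def by blast
qed

context
  fixes W :: "('a::{finite,linorder} list \<Rightarrow> 'k::field) set" and m :: nat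
  assumes W: "tsubspace m W"
begin

lemma lin_closed_W: "lin_closed W"
  using W by (simp add: tsubspace_def)

text \<open>One step of Gaussian elimination: the top word w is either cancelled by an element of W
  or moved into the normal-form part.\<close>

lemma eliminate_top_word:
  assumes g: "g \<in> tspace m" and gw: "\<And>v. g v \<noteq> 0 \<Longrightarrow> v \<le> w" and lw: "length w = m"
  obtains q k where "q \<in> nf_space m W" "k \<in> W" "\<And>v. q v \<noteq> 0 \<Longrightarrow> v \<le> w"
    "\<And>v. g v - q v - k v \<noteq> 0 \<Longrightarrow> v < w"
proof (cases "is_leading_word W w")
  case True
  then obtain h where h: "h \<in> W" "h w \<noteq> 0" "\<And>v. h v \<noteq> 0 \<Longrightarrow> v \<le> w"
    unfolding is_leading_word_def by blast
  show ?thesis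
  proof (rule that[of "\<lambda>_. 0" "\<lambda>v. g w / h w * h v"])
    show "(\<lambda>_. 0) \<in> nf_space m W" by (rule lin_closed_zero[OF lin_closed_nf_space])
    show "(\<lambda>v. g w / h w * h v) \<in> W" by (rule lin_closed_smult[OF lin_closed_W h(1)])
    fix v assume ne: "g v - 0 - g w / h w * h v \<noteq> 0"
    hence "g v \<noteq> 0 \<or> h v \<noteq> 0" by auto
    hence "v \<le> w" using gw h(3) by blast
    thus "v < w" using ne h(2) by (cases "v = w") auto
  qed simp
next
  case False
  show ?thesis
  proof (rule that[of "\<lambda>v. g w * wd w v" "\<lambda>_. 0"])
    show "(\<lambda>v. g w * wd w v) \<in> nf_space m W"
      unfolding nf_space_def using False lin_closed_smult[OF lin_closed_tspace wd_tspace[OF lw]]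
      by (auto simp: wd_def)
    show "(\<lambda>_. 0) \<in> W" by (rule lin_closed_zero[OF lin_closed_W])
    fix v
    show "g w * wd w v \<noteq> 0 \<Longrightarrow> v \<le> w" by (auto simp: wd_def split: if_splits)
    assume "g v - g w * wd w v - 0 \<noteq> 0"
    thus "v < w" using gw by (cases "v = w") (auto simp: wd_def le_less)
  qed
qed

lemma nf_decomp_below:
  assumes "g \<in> tspace m" "\<And>v. g v \<noteq> 0 \<Longrightarrow> v < B"
  shows "\<exists>p\<in>nf_space m W. (\<lambda>v. g v - p v) \<in> W \<and> (\<forall>v. p v \<noteq> 0 \<longrightarrow> v < B)"
  using assms
proof (induction "card {v. length v = m \<and> v < B}" arbitrary: g B rule: less_induct)
  case less
  show ?case
  proof (cases "\<forall>v. g v = 0")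
    case True
    thus ?thesis using lin_closed_zero[OF lin_closed_W] lin_closed_zero[OF lin_closed_nf_space]
      by (intro bexI[of _ "\<lambda>_. 0"]) auto
  next
    case False
    then obtain w where w: "g w \<noteq> 0" "length w = m" "\<And>u. g u \<noteq> 0 \<Longrightarrow> u \<le> w"
      using exists_top_word[OF less.prems(1)] by metis
    obtain q k where qk: "q \<in> nf_space m W" "k \<in> W" "\<And>v. q v \<noteq> 0 \<Longrightarrow> v \<le> w"
      "\<And>v. g v - q v - k v \<noteq> 0 \<Longrightarrow> v < w"
      using eliminate_top_word[OF less.prems(1) w(3,2)] by blast
    let ?g' = "\<lambda>v. g v - q v - k v"
    have g': "?g' \<in> tspace m"
      using less.prems(1) nf_space_tspace[OF qk(1)] tsubspace_imp_tspace[OF W qk(2)]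
      by (intro lin_closed_diff[OF lin_closed_tspace]) auto
    have fin: "finite {v. length v = m \<and> v < B}"
      by (rule finite_subset[OF _ finite_words_length[of m]]) auto
    have "{v. length v = m \<and> v < w} \<subset> {v. length v = m \<and> v < B}"
      using w less.prems(2)[OF w(1)] by auto
    hence "card {v. length v = m \<and> v < w} < card {v. length v = m \<and> v < B}"
      by (rule psubset_card_mono[OF fin])
    then obtain p' where p': "p' \<in> nf_space m W" "(\<lambda>v. ?g' v - p' v) \<in> W" "\<forall>v. p' v \<noteq> 0 \<longrightarrow> v < w"
      using less.hyps[OF _ g'] qk(4) by blast
    show ?thesis
    proof (intro bexI conjI allI impI)
      show "(\<lambda>v. p' v + q v) \<in> nf_space m W" by (rule lin_closed_add[OF lin_closed_nf_space p'(1) qk(1)])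
      have "(\<lambda>v. (\<lambda>v. ?g' v - p' v) v + k v) \<in> W" by (rule lin_closed_add[OF lin_closed_W p'(2) qk(2)])
      thus "(\<lambda>v. g v - (p' v + q v)) \<in> W" by (simp add: algebra_simps)
      fix v assume "p' v + q v \<noteq> 0"
      hence "v \<le> w" using p'(3) qk(3) by (metis add.right_neutral add_0 less_imp_le)
      thus "v < B" using less.prems(2)[OF w(1)] by simp
    qed
  qed
qed

lemma nf_decomp:
  assumes "g \<in> tspace m"
  shows "\<exists>p\<in>nf_space m W. (\<lambda>v. g v - p v) \<in> W"
proof -
  obtain B :: "'a list" where "\<forall>v. length v = m \<longrightarrow> v < B" using exists_word_above_length by blast
  thus ?thesis using nf_decomp_below[OF assms] tspace_length[OF assms] by blast
qed

lemma nf_decomp_unique: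
  assumes "p1 \<in> nf_space m W" "p2 \<in> nf_space m W" "(\<lambda>v. g v - p1 v) \<in> W" "(\<lambda>v. g v - p2 v) \<in> W"
  shows "p1 = p2"
proof -
  have "(\<lambda>v. (\<lambda>v. g v - p2 v) v - (\<lambda>v. g v - p1 v) v) \<in> W"
    by (rule lin_closed_diff[OF lin_closed_W assms(4,3)])
  hence "(\<lambda>v. p1 v - p2 v) \<in> W" by simp
  moreover have "(\<lambda>v. p1 v - p2 v) \<in> nf_space m W"
    by (rule lin_closed_diff[OF lin_closed_nf_space assms(1,2)])
  ultimately have "(\<lambda>v. p1 v - p2 v) = (\<lambda>_. 0)" by (metis nf_space_Int_eq_zero)
  thus ?thesis by (simp add: fun_eq_iff)
qed

lemma nf_proj_eq: "p \<in> nf_space m W \<Longrightarrow> (\<lambda>v. g v - p v) \<in> W \<Longrightarrow> nf_proj m W g = p"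
  unfolding nf_proj_def by (rule the_equality) (auto intro: nf_decomp_unique)

lemma nf_proj_props:
  assumes "g \<in> tspace m"
  shows "nf_proj m W g \<in> nf_space m W \<and> (\<lambda>v. g v - nf_proj m W g v) \<in> W"
proof -
  obtain p where "p \<in> nf_space m W" "(\<lambda>v. g v - p v) \<in> W" using nf_decomp[OF assms] by blast
  thus ?thesis using nf_proj_eq by simp
qed

lemma nf_proj_add:
  assumes f: "f \<in> tspace m" and g: "g \<in> tspace m"
  shows "nf_proj m W (\<lambda>v. f v + g v) = (\<lambda>v. nf_proj m W f v + nf_proj m W g v)"
proof (rule nf_proj_eq)
  show "(\<lambda>v. nf_proj m W f v + nf_proj m W g v) \<in> nf_space m W"
    using nf_proj_props[OF f] nf_proj_props[OF g] by (blast intro: lin_closed_add[OF lin_closed_nf_space])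
  have "(\<lambda>v. (\<lambda>v. f v - nf_proj m W f v) v + (\<lambda>v. g v - nf_proj m W g v) v) \<in> W"
    using nf_proj_props[OF f] nf_proj_props[OF g] by (intro lin_closed_add[OF lin_closed_W]) simp_all
  thus "(\<lambda>v. f v + g v - (nf_proj m W f v + nf_proj m W g v)) \<in> W" by (simp add: algebra_simps)
qed

lemma nf_proj_smult:
  assumes f: "f \<in> tspace m"
  shows "nf_proj m W (\<lambda>v. c * f v) = (\<lambda>v. c * nf_proj m W f v)"
proof (rule nf_proj_eq)
  show "(\<lambda>v. c * nf_proj m W f v) \<in> nf_space m W"
    using nf_proj_props[OF f] by (blast intro: lin_closed_smult[OF lin_closed_nf_space])
  have "(\<lambda>v. c * (\<lambda>v. f v - nf_proj m W f v) v) \<in> W"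
    using nf_proj_props[OF f] by (intro lin_closed_smult[OF lin_closed_W]) simp
  thus "(\<lambda>v. c * f v - c * nf_proj m W f v) \<in> W" by (simp add: algebra_simps)
qed

lemma nf_proj_wd:
  assumes lw: "length w = m"
  shows "nf_proj m W (wd w) = wd w \<or> (\<forall>v. nf_proj m W (wd w) v \<noteq> 0 \<longrightarrow> v < w)"
proof (cases "is_leading_word W w")
  case False
  have "wd w \<in> nf_space m W"
    unfolding nf_space_def using False wd_tspace[OF lw] by (auto simp: wd_def split: if_splits)
  thus ?thesis using nf_proj_eq lin_closed_zero[OF lin_closed_W] by simp
next
  case True
  then obtain h where h: "h \<in> W" "h w \<noteq> 0" "\<forall>v. h v \<noteq> 0 \<longrightarrow> v \<le> w"
    unfolding is_leading_word_def by blast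
  let ?r = "\<lambda>v. wd w v - 1 / h w * h v"
  have ch: "(\<lambda>v. 1 / h w * h v) \<in> W" by (rule lin_closed_smult[OF lin_closed_W h(1)])
  have "?r \<in> tspace m"
    using wd_tspace[OF lw] tsubspace_imp_tspace[OF W ch] by (rule lin_closed_diff[OF lin_closed_tspace])
  moreover have "?r v \<noteq> 0 \<Longrightarrow> v < w" for v
    using h by (cases "v = w") (auto simp: wd_def le_less)
  ultimately obtain p where p: "p \<in> nf_space m W" "(\<lambda>v. ?r v - p v) \<in> W" "\<forall>v. p v \<noteq> 0 \<longrightarrow> v < w"
    using nf_decomp_below by blast
  have "(\<lambda>v. (\<lambda>v. ?r v - p v) v + 1 / h w * h v) \<in> W" by (rule lin_closed_add[OF lin_closed_W p(2) ch])
  hence "nf_proj m W (wd w) = p" using nf_proj_eq[OF p(1)] by simp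
  thus ?thesis using p(3) by simp
qed

lemma red_op_nf_proj: "is_red_op m (nf_proj m W)"
  unfolding is_red_op_def
proof (intro conjI ballI allI impI)
  fix f :: "'a list \<Rightarrow> 'k" assume "f \<in> tspace m"
  thus "nf_proj m W f \<in> tspace m" using nf_proj_props nf_space_tspace by blast
next
  fix f :: "'a list \<Rightarrow> 'k" assume "f \<in> tspace m"
  hence "nf_proj m W f \<in> nf_space m W" using nf_proj_props by blast
  thus "nf_proj m W (nf_proj m W f) = nf_proj m W f"
    using nf_proj_eq lin_closed_zero[OF lin_closed_W] by simp
qed (simp_all add: nf_proj_add nf_proj_smult nf_proj_wd)

lemma kerop_nf_proj: "kerop m (nf_proj m W) = W"
proof (intro set_eqI iffI)
  fix f assume "f \<in> kerop m (nf_proj m W)"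
  thus "f \<in> W" using nf_proj_props[of f] by (simp add: kerop_def)
next
  fix f assume "f \<in> W"
  moreover have "nf_proj m W f = (\<lambda>_. 0)"
    using nf_proj_eq[OF lin_closed_zero[OF lin_closed_nf_space]] \<open>f \<in> W\<close> by simp
  ultimately show "f \<in> kerop m (nf_proj m W)" using tsubspace_imp_tspace[OF W] by (simp add: kerop_def)
qed

end

theorem theta_inv_props:
  fixes W :: "('a::{finite,linorder} list \<Rightarrow> 'k::field) set"
  assumes "tsubspace m W"
  shows "is_red_op m (theta_inv m W) \<and> kerop m (theta_inv m W) = W"
  unfolding theta_inv_def
  using someI_ex[of "\<lambda>T. is_red_op m T \<and> kerop m T = W"] red_op_nf_proj[OF assms] kerop_nf_proj[OF assms]
  by blast

section \<open>Kernels of iterated meets and joins\<close>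

fun subsp_sum_list :: "('a list \<Rightarrow> 'k::field) set list \<Rightarrow> ('a list \<Rightarrow> 'k) set" where
  "subsp_sum_list [] = {(\<lambda>_. 0)}"
| "subsp_sum_list [W] = W"
| "subsp_sum_list (W # Ws) = subsp_sum W (subsp_sum_list Ws)"

lemma tsubspace_subsp_sum:
  assumes A: "tsubspace m A" and B: "tsubspace m B"
  shows "tsubspace m (subsp_sum A B)"
proof -
  have Ac: "lin_closed A" and Bc: "lin_closed B" using A B by (auto simp: tsubspace_def)
  have "lin_closed (subsp_sum A B)"
    unfolding lin_closed_def
  proof (intro conjI ballI allI)
    show "(\<lambda>_. 0) \<in> subsp_sum A B" unfolding subsp_sum_def
      using lin_closed_zero[OF Ac] lin_closed_zero[OF Bc] by force
  next
    fix f g assume "f \<in> subsp_sum A B" "g \<in> subsp_sum A B"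
    then obtain a1 b1 a2 b2 where ab: "f = (\<lambda>v. a1 v + b1 v)" "a1 \<in> A" "b1 \<in> B"
      "g = (\<lambda>v. a2 v + b2 v)" "a2 \<in> A" "b2 \<in> B" unfolding subsp_sum_def by blast
    have "(\<lambda>v. f v + g v) = (\<lambda>v. (\<lambda>v. a1 v + a2 v) v + (\<lambda>v. b1 v + b2 v) v)"
      using ab by (auto simp: algebra_simps)
    thus "(\<lambda>v. f v + g v) \<in> subsp_sum A B" unfolding subsp_sum_def
      using lin_closed_add[OF Ac ab(2) ab(5)] lin_closed_add[OF Bc ab(3) ab(6)]
      by (intro CollectI exI[of _ "\<lambda>v. a1 v + a2 v"] exI[of _ "\<lambda>v. b1 v + b2 v"]) auto
  next
    fix c f assume "f \<in> subsp_sum A B"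
    then obtain a1 b1 where ab: "f = (\<lambda>v. a1 v + b1 v)" "a1 \<in> A" "b1 \<in> B"
      unfolding subsp_sum_def by blast
    have "(\<lambda>v. c * f v) = (\<lambda>v. (\<lambda>v. c * a1 v) v + (\<lambda>v. c * b1 v) v)"
      using ab by (auto simp: algebra_simps)
    thus "(\<lambda>v. c * f v) \<in> subsp_sum A B" unfolding subsp_sum_def
      using lin_closed_smult[OF Ac ab(2)] lin_closed_smult[OF Bc ab(3)]
      by (intro CollectI exI[of _ "\<lambda>v. c * a1 v"] exI[of _ "\<lambda>v. c * b1 v"]) auto
  qed
  moreover have "subsp_sum A B \<subseteq> tspace m"
    using A B by (fastforce simp: subsp_sum_def tsubspace_def tspace_def)
  ultimately show ?thesis by (simp add: tsubspace_def)
qed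

lemma subsp_sum_left: "lin_closed B \<Longrightarrow> a \<in> A \<Longrightarrow> a \<in> subsp_sum A B"
  unfolding subsp_sum_def by (intro CollectI exI[of _ a] exI[of _ "\<lambda>_. 0"]) (simp add: lin_closed_zero)

lemma subsp_sum_right: "lin_closed A \<Longrightarrow> b \<in> B \<Longrightarrow> b \<in> subsp_sum A B"
  unfolding subsp_sum_def by (intro CollectI exI[of _ "\<lambda>_. 0"] exI[of _ b]) (simp add: lin_closed_zero)

lemma tsubspace_INTER:
  assumes I: "I \<noteq> {}" and F: "\<And>i. i \<in> I \<Longrightarrow> tsubspace m (F i)"
  shows "tsubspace m (\<Inter> (F ` I))"
proof -
  have c: "\<And>i. i \<in> I \<Longrightarrow> lin_closed (F i)" and t: "\<And>i. i \<in> I \<Longrightarrow> F i \<subseteq> tspace m"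
    using F by (auto simp: tsubspace_def)
  have "lin_closed (\<Inter> (F ` I))"
    unfolding lin_closed_def using lin_closed_zero[OF c] lin_closed_add[OF c] lin_closed_smult[OF c]
    by simp
  moreover have "\<Inter> (F ` I) \<subseteq> tspace m" using I t by blast
  ultimately show ?thesis by (simp add: tsubspace_def)
qed

lemma tsubspace_Int: "tsubspace m A \<Longrightarrow> tsubspace m B \<Longrightarrow> tsubspace m (A \<inter> B)"
  unfolding tsubspace_def lin_closed_def by auto

lemma tsubspace_subsp_sum_list:
  "Ws \<noteq> [] \<Longrightarrow> (\<forall>W\<in>set Ws. tsubspace m W) \<Longrightarrow> tsubspace m (subsp_sum_list Ws)"
  by (induction Ws rule: subsp_sum_list.induct) (auto intro: tsubspace_subsp_sum)

lemma big_meet_props: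
  fixes Ts :: "((('a::{finite,linorder} list \<Rightarrow> 'k::field) \<Rightarrow> 'a list \<Rightarrow> 'k)) list"
  shows "Ts \<noteq> [] \<Longrightarrow> (\<forall>T\<in>set Ts. is_red_op m T) \<Longrightarrow>
    is_red_op m (big_meet m Ts) \<and> kerop m (big_meet m Ts) = subsp_sum_list (map (kerop m) Ts)"
proof (induction m Ts rule: big_meet.induct)
  case (3 m T T' Ts)
  let ?M = "big_meet m (T' # Ts)"
  have IH: "is_red_op m ?M" "kerop m ?M = subsp_sum_list (map (kerop m) (T' # Ts))" using 3 by auto
  have "tsubspace m (subsp_sum (kerop m T) (kerop m ?M))"
    using tsubspace_kerop[OF IH(1)] tsubspace_kerop 3(3) by (intro tsubspace_subsp_sum) auto
  from theta_inv_props[OF this] show ?case using IH by (simp add: red_meet_def)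
qed auto

lemma big_join_props:
  fixes Ts :: "((('a::{finite,linorder} list \<Rightarrow> 'k::field) \<Rightarrow> 'a list \<Rightarrow> 'k)) list"
  shows "Ts \<noteq> [] \<Longrightarrow> (\<forall>T\<in>set Ts. is_red_op m T) \<Longrightarrow>
    is_red_op m (big_join m Ts) \<and> kerop m (big_join m Ts) = \<Inter> (kerop m ` set Ts)"
proof (induction m Ts rule: big_join.induct)
  case (3 m T T' Ts)
  let ?M = "big_join m (T' # Ts)"
  have IH: "is_red_op m ?M" "kerop m ?M = \<Inter> (kerop m ` set (T' # Ts))" using 3 by auto
  have "tsubspace m (kerop m T \<inter> kerop m ?M)"
    using tsubspace_kerop[OF IH(1)] tsubspace_kerop 3(3) by (intro tsubspace_Int) auto
  from theta_inv_props[OF this] show ?case using IH by (simp add: red_join_def)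
qed auto

lemma lin_span_Union_eq_subsp_sum_list:
  "Ws \<noteq> [] \<Longrightarrow> (\<forall>W\<in>set Ws. tsubspace m W) \<Longrightarrow> lin_span (\<Union> (set Ws)) = subsp_sum_list Ws"
proof (induction Ws rule: subsp_sum_list.induct)
  case (2 W)
  thus ?case by (simp add: lin_span_eq tsubspace_def)
next
  case (3 W W' Ws)
  let ?U = "\<Union> (set (W' # Ws))" and ?L = "subsp_sum_list (W' # Ws)"
  have IH: "lin_span ?U = ?L" using 3 by auto
  have L: "tsubspace m ?L" using 3(3) by (intro tsubspace_subsp_sum_list) auto
  have W: "tsubspace m W" using 3(3) by auto
  have "lin_span (W \<union> ?U) = subsp_sum W ?L"
  proof
    show "lin_span (W \<union> ?U) \<subseteq> subsp_sum W ?L"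
    proof (rule lin_span_least)
      show "lin_closed (subsp_sum W ?L)" using tsubspace_subsp_sum[OF W L] by (simp add: tsubspace_def)
      have "W \<subseteq> subsp_sum W ?L" "?L \<subseteq> subsp_sum W ?L"
        using W L by (auto simp: tsubspace_def subsp_sum_left subsp_sum_right)
      thus "W \<union> ?U \<subseteq> subsp_sum W ?L" using IH lin_span_superset by blast
    qed
  next
    show "subsp_sum W ?L \<subseteq> lin_span (W \<union> ?U)"
    proof
      fix f assume "f \<in> subsp_sum W ?L"
      then obtain a b where ab: "f = (\<lambda>v. a v + b v)" "a \<in> W" "b \<in> ?L" unfolding subsp_sum_def by blast
      have "a \<in> lin_span (W \<union> ?U)" using ab(2) lin_span_superset by blast
      moreover have "b \<in> lin_span (W \<union> ?U)" using ab(3) IH lin_span_mono[of ?U "W \<union> ?U"] by auto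
      ultimately show "f \<in> lin_span (W \<union> ?U)" using lin_closed_add[OF lin_closed_lin_span] ab(1) by blast
    qed
  qed
  thus ?case by simp
qed auto

section \<open>Tensor products described by slices\<close>

text \<open>slice_space m i n X is V^{\<otimes>i} \<otimes> X \<otimes> V^{\<otimes>m-i-n} \<subseteq> V^{\<otimes>m} (see tensp_sandwich).\<close>

definition slice :: "nat \<Rightarrow> 'a list \<Rightarrow> 'a list \<Rightarrow> ('a list \<Rightarrow> 'k::field) \<Rightarrow> 'a list \<Rightarrow> 'k" where
  "slice n u z f = (\<lambda>x. if length x = n then f (u @ x @ z) else 0)"

definition slice_space :: "nat \<Rightarrow> nat \<Rightarrow> nat \<Rightarrow> ('a list \<Rightarrow> 'k::field) set \<Rightarrow> ('a list \<Rightarrow> 'k) set" where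
  "slice_space m i n X =
     {f \<in> tspace m. \<forall>u z. length u = i \<longrightarrow> length z = m - i - n \<longrightarrow> slice n u z f \<in> X}"

lemma slice_tspace: "slice n u z f \<in> tspace n"
  by (simp add: slice_def tspace_def)

lemma slice_add: "slice n u z (\<lambda>w. f w + g w) = (\<lambda>x. slice n u z f x + slice n u z g x)"
  by (rule ext) (simp add: slice_def)

lemma slice_smult: "slice n u z (\<lambda>w. c * f w) = (\<lambda>x. c * slice n u z f x)"
  by (rule ext) (simp add: slice_def)

lemma slice_diff: "slice n u z (\<lambda>w. f w - g w) = (\<lambda>x. slice n u z f x - slice n u z g x)"
  by (rule ext) (simp add: slice_def)

lemma slice_slice:
  assumes "length u' + n + length z' = l"
  shows "slice n u' z' (slice l u z f) = slice n (u @ u') (z' @ z) f"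
  using assms by (intro ext) (simp add: slice_def)

lemma slice_space_right:
  "slice_space (a + b) 0 a W = {f \<in> tspace (a + b). \<forall>z. length z = b \<longrightarrow> slice a [] z f \<in> W}"
  by (auto simp: slice_space_def)

lemma tsubspace_slice_space:
  assumes X: "lin_closed X"
  shows "tsubspace m (slice_space m i n X)"
  unfolding tsubspace_def lin_closed_def
proof (intro conjI ballI allI subsetI)
  show "(\<lambda>_. 0) \<in> slice_space m i n X"
    using lin_closed_zero[OF X] by (simp add: slice_space_def slice_def tspace_def)
next
  fix f g assume f: "f \<in> slice_space m i n X" and g: "g \<in> slice_space m i n X"
  have "(\<lambda>v. f v + g v) \<in> tspace m"
    using f g by (intro lin_closed_add[OF lin_closed_tspace]) (simp_all add: slice_space_def)
  moreover have "slice n u z (\<lambda>v. f v + g v) \<in> X" if "length u = i" "length z = m - i - n" for u z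
    using f g that by (simp add: slice_space_def slice_add lin_closed_add[OF X])
  ultimately show "(\<lambda>v. f v + g v) \<in> slice_space m i n X" by (simp add: slice_space_def)
next
  fix c f assume f: "f \<in> slice_space m i n X"
  have "(\<lambda>v. c * f v) \<in> tspace m"
    using f by (intro lin_closed_smult[OF lin_closed_tspace]) (simp add: slice_space_def)
  moreover have "slice n u z (\<lambda>v. c * f v) \<in> X" if "length u = i" "length z = m - i - n" for u z
    using f that by (simp add: slice_space_def slice_smult lin_closed_smult[OF X])
  ultimately show "(\<lambda>v. c * f v) \<in> slice_space m i n X" by (simp add: slice_space_def)
qed (simp add: slice_space_def)

lemma slice_space_self:
  assumes "X \<subseteq> tspace n"
  shows "slice_space n 0 n X = X"
proof -
  have "slice n [] [] f = f" if "f \<in> tspace n" for f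
    using that by (intro ext) (simp add: slice_def tspace_def)
  thus ?thesis using assms by (auto simp: slice_space_def)
qed

lemma slice_space_nested:
  assumes "j + n \<le> l" "i + l \<le> m"
  shows "slice_space m i l (slice_space l j n X) = slice_space m (i + j) n X"
proof (intro set_eqI iffI)
  fix f assume f: "f \<in> slice_space m i l (slice_space l j n X)"
  have "slice n U Z f \<in> X" if U: "length U = i + j" and Z: "length Z = m - (i + j) - n" for U Z
  proof -
    let ?k = "l - j - n"
    have "slice l (take i U) (drop ?k Z) f \<in> slice_space l j n X"
      using f U Z assms by (simp add: slice_space_def)
    hence "slice n (drop i U) (take ?k Z) (slice l (take i U) (drop ?k Z) f) \<in> X"
      using U Z assms by (simp add: slice_space_def)
    thus ?thesis using U Z assms by (simp add: slice_slice)
  qed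
  thus "f \<in> slice_space m (i + j) n X" using f by (simp add: slice_space_def)
next
  fix f assume f: "f \<in> slice_space m (i + j) n X"
  have "slice l u z f \<in> slice_space l j n X" if u: "length u = i" and z: "length z = m - i - l" for u z
  proof -
    have "slice n u' z' (slice l u z f) \<in> X" if "length u' = j" "length z' = l - j - n" for u' z'
      using f u z that assms by (simp add: slice_space_def slice_slice)
    thus ?thesis by (simp add: slice_space_def slice_tspace)
  qed
  thus "f \<in> slice_space m i l (slice_space l j n X)" using f by (simp add: slice_space_def)
qed

lemma slice_space_INTER:
  "I \<noteq> {} \<Longrightarrow> slice_space m i n (\<Inter> (F ` I)) = \<Inter> ((\<lambda>j. slice_space m i n (F j)) ` I)"
  unfolding slice_space_def by auto

lemma slice_glue_right:
  assumes "\<And>z. length z = b \<Longrightarrow> P z \<in> tspace a" and "length z = b"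
  shows "slice a [] z (\<lambda>w. if length w = a + b then P (drop a w) (take a w) else 0) = P z"
  using assms by (intro ext) (auto simp: slice_def tspace_def)

lemma slice_space_subsp_sum:
  assumes W1: "tsubspace a W1" and W2: "tsubspace a W2"
  shows "slice_space (a + b) 0 a (subsp_sum W1 W2)
       = subsp_sum (slice_space (a + b) 0 a W1) (slice_space (a + b) 0 a W2)"
proof (intro subset_antisym subsetI)
  fix f assume "f \<in> subsp_sum (slice_space (a + b) 0 a W1) (slice_space (a + b) 0 a W2)"
  then obtain g h where gh: "f = (\<lambda>v. g v + h v)" "g \<in> slice_space (a + b) 0 a W1"
    "h \<in> slice_space (a + b) 0 a W2"
    unfolding subsp_sum_def by blast
  have "f \<in> tspace (a + b)"
    using gh lin_closed_add[OF lin_closed_tspace] by (auto simp: slice_space_right)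
  moreover have "slice a [] z f \<in> subsp_sum W1 W2" if "length z = b" for z
    using gh that unfolding subsp_sum_def slice_space_right
    by (intro CollectI exI[of _ "slice a [] z g"] exI[of _ "slice a [] z h"]) (simp add: slice_add)
  ultimately show "f \<in> slice_space (a + b) 0 a (subsp_sum W1 W2)" by (simp add: slice_space_right)
next
  fix f assume "f \<in> slice_space (a + b) 0 a (subsp_sum W1 W2)"
  hence ft: "f \<in> tspace (a + b)" and fs: "\<And>z. length z = b \<Longrightarrow> slice a [] z f \<in> subsp_sum W1 W2"
    by (auto simp: slice_space_right)
  define P where "P z = (SOME p. p \<in> W1 \<and> (\<lambda>x. slice a [] z f x - p x) \<in> W2)" for z
  have P: "P z \<in> W1 \<and> (\<lambda>x. slice a [] z f x - P z x) \<in> W2" if lz: "length z = b" for z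
  proof -
    obtain p q where pq: "slice a [] z f = (\<lambda>x. p x + q x)" "p \<in> W1" "q \<in> W2"
      using fs[OF lz] unfolding subsp_sum_def by blast
    hence "\<exists>p. p \<in> W1 \<and> (\<lambda>x. slice a [] z f x - p x) \<in> W2" by (intro exI[of _ p]) simp
    thus ?thesis unfolding P_def by (rule someI_ex)
  qed
  define g where "g = (\<lambda>w. if length w = a + b then P (drop a w) (take a w) else 0)"
  have slice_g: "slice a [] z g = P z" if "length z = b" for z
    unfolding g_def using P W1 that by (intro slice_glue_right) (auto simp: tsubspace_def)
  have gt: "g \<in> tspace (a + b)" by (simp add: g_def tspace_def)
  have "g \<in> slice_space (a + b) 0 a W1" using P slice_g gt by (simp add: slice_space_right)
  moreover have "(\<lambda>v. f v - g v) \<in> slice_space (a + b) 0 a W2"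
    using P slice_g lin_closed_diff[OF lin_closed_tspace ft gt]
    by (simp add: slice_space_right slice_diff)
  ultimately show "f \<in> subsp_sum (slice_space (a + b) 0 a W1) (slice_space (a + b) 0 a W2)"
    unfolding subsp_sum_def by (intro CollectI exI[of _ g] exI[of _ "\<lambda>v. f v - g v"]) simp
qed

lemma slice_space_subsp_sum_list:
  "Ws \<noteq> [] \<Longrightarrow> (\<forall>W\<in>set Ws. tsubspace a W) \<Longrightarrow>
    slice_space (a + b) 0 a (subsp_sum_list Ws) = subsp_sum_list (map (slice_space (a + b) 0 a) Ws)"
proof (induction Ws rule: subsp_sum_list.induct)
  case (3 W W' Ws)
  have "tsubspace a (subsp_sum_list (W' # Ws))" using 3(3) by (intro tsubspace_subsp_sum_list) auto
  thus ?case using 3 slice_space_subsp_sum[of a W "subsp_sum_list (W' # Ws)" b] by simp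
qed auto

lemma tens_tspace: "f \<in> tspace a \<Longrightarrow> g \<in> tspace b \<Longrightarrow> tens a f g \<in> tspace (a + b)"
  unfolding tspace_def tens_def
proof (intro CollectI allI impI)
  fix w :: "'a list" assume "f \<in> {f. \<forall>w. length w \<noteq> a \<longrightarrow> f w = 0}"
    and "g \<in> {f. \<forall>w. length w \<noteq> b \<longrightarrow> f w = 0}" and "length w \<noteq> a + b"
  thus "f (take a w) * g (drop a w) = 0" by (cases "length w < a") simp_all
qed

lemma slice_tens_right:
  assumes "f \<in> tspace a" "length z = b"
  shows "slice a [] z (tens a f g) = (\<lambda>x. g z * f x)"
  using assms by (intro ext) (simp add: slice_def tens_def tspace_def)

lemma slice_tens_left:
  assumes "g \<in> tspace b" "length u = a"
  shows "slice b u [] (tens a f g) = (\<lambda>x. f u * g x)"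
  using assms by (intro ext) (simp add: slice_def tens_def tspace_def)

lemma tspace_eq_sum_tens_right:
  fixes f :: "'a::finite list \<Rightarrow> 'k::field"
  assumes "f \<in> tspace (a + b)"
  shows "f = (\<lambda>w. \<Sum>z\<in>{z. length z = b}. tens a (slice a [] z f) (wd z) w)"
proof
  fix w :: "'a list"
  have "(\<Sum>z\<in>{z. length z = b}. tens a (slice a [] z f) (wd z) w)
      = (\<Sum>z\<in>{z. length z = b}. if drop a w = z then slice a [] (drop a w) f (take a w) else 0)"
    by (intro sum.cong refl) (simp add: tens_def wd_def)
  also have "\<dots> = f w"
    using assms by (cases "length w = a + b") (auto simp: finite_words_length slice_def tspace_def)
  finally show "f w = (\<Sum>z\<in>{z. length z = b}. tens a (slice a [] z f) (wd z) w)" by simp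
qed

lemma tspace_eq_sum_tens_left:
  fixes f :: "'a::finite list \<Rightarrow> 'k::field"
  assumes "f \<in> tspace (a + b)"
  shows "f = (\<lambda>w. \<Sum>u\<in>{u. length u = a}. tens a (wd u) (slice b u [] f) w)"
proof
  fix w :: "'a list"
  have "(\<Sum>u\<in>{u. length u = a}. tens a (wd u) (slice b u [] f) w)
      = (\<Sum>u\<in>{u. length u = a}. if take a w = u then slice b (take a w) [] f (drop a w) else 0)"
    by (intro sum.cong refl) (simp add: tens_def wd_def)
  also have "\<dots> = f w"
    using assms by (cases "length w = a + b") (auto simp: finite_words_length slice_def tspace_def)
  finally show "f w = (\<Sum>u\<in>{u. length u = a}. tens a (wd u) (slice b u [] f) w)" by simp
qed

lemma tens_in_tensp: "f \<in> W1 \<Longrightarrow> g \<in> W2 \<Longrightarrow> tens a f g \<in> tensp a W1 W2"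
  unfolding tensp_def by (rule subsetD[OF lin_span_superset]) blast

lemma tensp_tspace_right:
  fixes W :: "('a::finite list \<Rightarrow> 'k::field) set"
  assumes W: "tsubspace a W"
  shows "tensp a W (tspace b) = slice_space (a + b) 0 a W"
proof
  have Wc: "lin_closed W" and Wt: "W \<subseteq> tspace a" using W by (auto simp: tsubspace_def)
  show "tensp a W (tspace b) \<subseteq> slice_space (a + b) 0 a W"
    unfolding tensp_def
  proof (rule lin_span_least)
    show "lin_closed (slice_space (a + b) 0 a W)"
      using tsubspace_slice_space[OF Wc] by (simp add: tsubspace_def)
    show "{tens a f g |f g. f \<in> W \<and> g \<in> tspace b} \<subseteq> slice_space (a + b) 0 a W"
      using Wt tens_tspace slice_tens_right lin_closed_smult[OF Wc]
      by (fastforce simp: slice_space_right)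
  qed
next
  show "slice_space (a + b) 0 a W \<subseteq> tensp a W (tspace b)"
  proof
    fix f assume "f \<in> slice_space (a + b) 0 a W"
    hence f: "f \<in> tspace (a + b)" "\<And>z. length z = b \<Longrightarrow> slice a [] z f \<in> W"
      by (auto simp: slice_space_right)
    have "(\<lambda>w. \<Sum>z\<in>{z. length z = b}. tens a (slice a [] z f) (wd z) w) \<in> tensp a W (tspace b)"
      unfolding tensp_def using f(2) wd_tspace
      by (intro lin_closed_sum[OF lin_closed_lin_span finite_words_length] ballI
          tens_in_tensp[unfolded tensp_def]) auto
    thus "f \<in> tensp a W (tspace b)" using tspace_eq_sum_tens_right[OF f(1)] by simp
  qed
qed

lemma tensp_tspace_left:
  fixes W :: "('a::finite list \<Rightarrow> 'k::field) set"
  assumes W: "tsubspace b W"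
  shows "tensp a (tspace a) W = slice_space (a + b) a b W"
proof
  have Wc: "lin_closed W" and Wt: "W \<subseteq> tspace b" using W by (auto simp: tsubspace_def)
  show "tensp a (tspace a) W \<subseteq> slice_space (a + b) a b W"
    unfolding tensp_def
  proof (rule lin_span_least)
    show "lin_closed (slice_space (a + b) a b W)"
      using tsubspace_slice_space[OF Wc] by (simp add: tsubspace_def)
    show "{tens a f g |f g. f \<in> tspace a \<and> g \<in> W} \<subseteq> slice_space (a + b) a b W"
      using Wt tens_tspace slice_tens_left lin_closed_smult[OF Wc]
      by (fastforce simp: slice_space_def)
  qed
next
  show "slice_space (a + b) a b W \<subseteq> tensp a (tspace a) W"
  proof
    fix f assume "f \<in> slice_space (a + b) a b W"
    hence f: "f \<in> tspace (a + b)" "\<And>u. length u = a \<Longrightarrow> slice b u [] f \<in> W"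
      by (auto simp: slice_space_def)
    have "(\<lambda>w. \<Sum>u\<in>{u. length u = a}. tens a (wd u) (slice b u [] f) w) \<in> tensp a (tspace a) W"
      unfolding tensp_def using f(2) wd_tspace
      by (intro lin_closed_sum[OF lin_closed_lin_span finite_words_length] ballI
          tens_in_tensp[unfolded tensp_def]) auto
    thus "f \<in> tensp a (tspace a) W" using tspace_eq_sum_tens_left[OF f(1)] by simp
  qed
qed

lemma tensp_sandwich:
  fixes X :: "('a::finite list \<Rightarrow> 'k::field) set"
  assumes X: "tsubspace n X" and "i + n \<le> m"
  shows "tensp i (tspace i) (tensp n X (tspace (m - n - i))) = slice_space m i n X"
proof -
  have "tensp n X (tspace (m - n - i)) = slice_space (n + (m - n - i)) 0 n X"
    by (rule tensp_tspace_right[OF X])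
  moreover have "tsubspace (n + (m - n - i)) (slice_space (n + (m - n - i)) 0 n X)"
    using X by (intro tsubspace_slice_space) (simp add: tsubspace_def)
  ultimately have "tensp i (tspace i) (tensp n X (tspace (m - n - i)))
      = slice_space (i + (n + (m - n - i))) i (n + (m - n - i)) (slice_space (n + (m - n - i)) 0 n X)"
    by (simp add: tensp_tspace_left)
  also have "\<dots> = slice_space m i n X"
    using slice_space_nested[of 0 n "n + (m - n - i)" i m X] assms(2) by simp
  finally show ?thesis .
qed

section \<open>The operators S and S_i\<close>

lemma lin_ext_add: "lin_ext m img (\<lambda>v. f v + g v) = (\<lambda>v. lin_ext m img f v + lin_ext m img g v)"
  by (rule ext) (simp add: lin_ext_def distrib_right sum.distrib)

lemma lin_ext_smult: "lin_ext m img (\<lambda>v. c * f v) = (\<lambda>v. c * lin_ext m img f v)"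
  by (rule ext) (simp add: lin_ext_def sum_distrib_left mult.assoc)

lemma lin_ext_diff: "lin_ext m img (\<lambda>v. f v - g v) = (\<lambda>v. lin_ext m img f v - lin_ext m img g v)"
  by (rule ext) (simp add: lin_ext_def left_diff_distrib sum_subtractf)

lemma lin_ext_sum: "lin_ext m img (\<lambda>v. \<Sum>b\<in>B. F b v) = (\<lambda>v. \<Sum>b\<in>B. lin_ext m img (F b) v)"
  by (rule ext) (simp add: lin_ext_def sum_distrib_right sum.swap[of _ B])

lemma lin_ext_zero: "lin_ext m img (\<lambda>_. 0) = (\<lambda>_. 0)"
  by (simp add: lin_ext_def)

lemma less_append_middle:
  fixes y y' :: "'a::linorder list"
  assumes "length y = length y'" "y < y'"
  shows "u @ y @ z < u @ y' @ z'"
proof (induction u)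
  case Nil
  show ?case using assms
  proof (induction y arbitrary: y')
    case (Cons a y)
    then obtain b t where "y' = b # t" by (cases y') auto
    thus ?case using Cons by auto
  qed simp
qed simp

lemma word_split3:
  assumes "length v = m" "i + N \<le> m"
  shows "v = take i v @ take N (drop i v) @ drop (i + N) v"
    "length (take i v) = i" "length (take N (drop i v)) = N" "length (drop (i + N) v) = m - i - N"
proof -
  have "v = take i v @ drop i v" by simp
  also have "drop i v = take N (drop i v) @ drop N (drop i v)" by (rule append_take_drop_id[symmetric])
  also have "drop N (drop i v) = drop (i + N) v" by (simp add: add.commute)
  finally show "v = take i v @ take N (drop i v) @ drop (i + N) v" .
qed (use assms in auto)

lemma tspace_eq_by_split3:
  assumes "i + N \<le> m" "g \<in> tspace m" "h \<in> tspace m"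
    and "\<And>u y z. length u = i \<Longrightarrow> length y = N \<Longrightarrow> length z = m - i - N \<Longrightarrow> g (u @ y @ z) = h (u @ y @ z)"
  shows "g = h"
proof
  fix v
  show "g v = h v"
  proof (cases "length v = m")
    case True
    note sp = word_split3[OF True assms(1)]
    show ?thesis using assms(4)[OF sp(2-4)] sp(1) by metis
  next
    case False
    thus ?thesis using assms(2,3) by (simp add: tspace_def)
  qed
qed

lemma slice_wd:
  assumes "length w = m" "i + N \<le> m" "length u = i" "length z = m - i - N"
  shows "slice N u z (wd w) = (if u = take i w \<and> z = drop (i + N) w then wd (take N (drop i w)) else (\<lambda>_. 0))"
proof
  fix x
  note sw = word_split3[OF assms(1,2)]
  have "length x = N \<Longrightarrow> u @ x @ z = w \<longleftrightarrow> u = take i w \<and> x = take N (drop i w) \<and> z = drop (i + N) w"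
    using assms(3) sw(1) by (metis append_eq_append_conv sw(2,3))
  thus "slice N u z (wd w) x
      = (if u = take i w \<and> z = drop (i + N) w then wd (take N (drop i w)) else (\<lambda>_. 0)) x"
    using sw(3) by (auto simp: slice_def wd_def)
qed

locale reduced_presentation =
  fixes R :: "('a::{finite,linorder} list \<Rightarrow> 'k::field) set" and N :: nat
  assumes RP: "reduced_hom_pres N R"
begin

lemma relations_tspace: "R \<subseteq> tspace N"
  using RP by (simp add: reduced_hom_pres_def)

lemma lm_relation:
  assumes f: "f \<in> R"
  shows "f (lm f) = 1" "length (lm f) = N" "\<And>v. f v \<noteq> 0 \<Longrightarrow> v \<le> lm f"
proof -
  have ft: "f \<in> tspace N" using f relations_tspace by blast
  have "f \<noteq> (\<lambda>_. 0)" using f RP by (simp add: reduced_hom_pres_def)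
  then obtain v0 where "f v0 \<noteq> 0" by auto
  hence fin: "finite {v. f v \<noteq> 0}" "{v. f v \<noteq> 0} \<noteq> {}" using finite_support[OF ft] by auto
  show "f (lm f) = 1" using f RP by (simp add: reduced_hom_pres_def)
  thus "length (lm f) = N" using tspace_length[OF ft] by simp
  show "\<And>v. f v \<noteq> 0 \<Longrightarrow> v \<le> lm f" unfolding lm_def using fin by simp
qed

lemma lm_inj: "f \<in> R \<Longrightarrow> g \<in> R \<Longrightarrow> lm f = lm g \<Longrightarrow> f = g"
  using RP unfolding reduced_hom_pres_def is_factor_def by (metis append.left_neutral append_Nil2)

lemma lower_word_not_lm: "f \<in> R \<Longrightarrow> v \<noteq> lm f \<Longrightarrow> f v \<noteq> 0 \<Longrightarrow> \<not> (\<exists>g\<in>R. lm g = v)"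
  using RP unfolding reduced_hom_pres_def normal_form_def is_factor_def
  by (metis append.left_neutral append_Nil2)

lemma S_img_lm: "f \<in> R \<Longrightarrow> S_img R (lm f) = (\<lambda>v. wd (lm f) v - f v)"
proof -
  assume f: "f \<in> R"
  have "(THE g. g \<in> R \<and> lm g = lm f) = f" using f lm_inj by (intro the_equality) auto
  thus ?thesis using f unfolding S_img_def by auto
qed

lemma S_img_not_lm: "\<not> (\<exists>f\<in>R. lm f = x) \<Longrightarrow> S_img R x = wd x"
  unfolding S_img_def by simp

lemma S_img_tspace: "length x = N \<Longrightarrow> S_img R x \<in> tspace N"
proof (cases "\<exists>f\<in>R. lm f = x")
  case True
  assume x: "length x = N"
  then obtain f where f: "f \<in> R" "lm f = x" using True by blast
  hence "f \<in> tspace N" using relations_tspace by blast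
  thus ?thesis using S_img_lm[OF f(1)] f(2) lin_closed_diff[OF lin_closed_tspace wd_tspace[OF x]] by simp
qed (simp add: S_img_not_lm wd_tspace)

lemma S_op_apply: "S_op N R g y = (\<Sum>x\<in>{w. length w = N}. g x * S_img R x y)"
  by (simp add: S_op_def lin_ext_def)

lemma S_op_tspace: "S_op N R g \<in> tspace N"
  using S_img_tspace unfolding tspace_def by (simp add: S_op_apply)

lemma S_op_wd: "length y0 = N \<Longrightarrow> S_op N R (wd y0) = S_img R y0"
proof
  fix y assume y0: "length y0 = N"
  have "S_op N R (wd y0) y = (\<Sum>x\<in>{w. length w = N}. if x = y0 then S_img R y0 y else 0)"
    unfolding S_op_apply by (intro sum.cong refl) (simp add: wd_def)
  also have "\<dots> = S_img R y0 y" using y0 by (simp add: finite_words_length)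
  finally show "S_op N R (wd y0) y = S_img R y0 y" .
qed

text \<open>S kills every relation f: the only word of f that S moves is lm f, which it sends
  to lm f - f; the other words of f are normal forms since the presentation is reduced.\<close>

lemma S_op_relation:
  assumes f: "f \<in> R"
  shows "S_op N R f = (\<lambda>_. 0)"
proof
  fix y
  have ft: "f \<in> tspace N" using f relations_tspace by blast
  have "S_op N R f y = (\<Sum>x\<in>{w. length w = N}. f x * wd x y - (if x = lm f then f y else 0))"
    unfolding S_op_apply
  proof (intro sum.cong refl)
    fix x :: "'a list"
    show "f x * S_img R x y = f x * wd x y - (if x = lm f then f y else 0)"
    proof (cases "x = lm f")
      case True
      thus ?thesis using S_img_lm[OF f] lm_relation(1)[OF f] by (simp add: right_diff_distrib)
    next
      case False
      thus ?thesis using lower_word_not_lm[OF f] S_img_not_lm by (cases "f x = 0") auto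
    qed
  qed
  also have "\<dots> = f y - f y"
    using tspace_sum_wd[OF ft] lm_relation(2)[OF f] by (simp add: sum_subtractf finite_words_length)
  finally show "S_op N R f y = 0" by simp
qed

lemma S_op_lin_span: "g \<in> lin_span R \<Longrightarrow> S_op N R g = (\<lambda>_. 0)"
proof -
  assume "g \<in> lin_span R"
  then obtain B c where b: "finite B" "B \<subseteq> R" "g = (\<lambda>v. \<Sum>b\<in>B. c b * b v)"
    unfolding lin_span_def by blast
  have "S_op N R g = (\<lambda>v. \<Sum>b\<in>B. c b * S_op N R b v)"
    unfolding b(3) S_op_def lin_ext_sum lin_ext_smult ..
  also have "\<dots> = (\<lambda>_. 0)" using b(2) S_op_relation by (intro ext sum.neutral) auto
  finally show ?thesis .
qed

lemma S_op_residual: "g \<in> tspace N \<Longrightarrow> (\<lambda>v. g v - S_op N R g v) \<in> lin_span R"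
proof -
  assume g: "g \<in> tspace N"
  have "(\<lambda>v. g v - S_op N R g v) = (\<lambda>v. \<Sum>x\<in>{w. length w = N}. g x * (wd x v - S_img R x v))"
    using tspace_sum_wd[OF g] by (simp add: S_op_apply right_diff_distrib sum_subtractf)
  also have "\<dots> \<in> lin_span R"
  proof (rule lin_closed_sum[OF lin_closed_lin_span finite_words_length], rule ballI)
    fix x :: "'a list"
    show "(\<lambda>v. g x * (wd x v - S_img R x v)) \<in> lin_span R"
    proof (cases "\<exists>f\<in>R. lm f = x")
      case True
      then obtain f where f: "f \<in> R" "lm f = x" by blast
      have "(\<lambda>v. g x * f v) \<in> lin_span R"
        using f lin_span_superset by (blast intro: lin_closed_smult[OF lin_closed_lin_span])
      thus ?thesis using S_img_lm[OF f(1)] f(2) by simp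
    next
      case False
      thus ?thesis using S_img_not_lm[OF False] lin_closed_zero[OF lin_closed_lin_span] by simp
    qed
  qed
  finally show ?thesis .
qed

lemma S_op_eq_zero_iff: "g \<in> tspace N \<Longrightarrow> S_op N R g = (\<lambda>_. 0) \<longleftrightarrow> g \<in> lin_span R"
  using S_op_residual[of g] S_op_lin_span[of g] by auto

lemma S_op_idem: "g \<in> tspace N \<Longrightarrow> S_op N R (S_op N R g) = S_op N R g"
  using S_op_lin_span[OF S_op_residual, of g]
  unfolding S_op_def lin_ext_diff by (auto simp: fun_eq_iff)


lemma S_i_basis_apply:
  "tens i (wd (take i w)) (tens N (S_img R (take N (drop i w))) (wd (drop (i + N) w))) v
   = wd (take i w) (take i v) * (S_img R (take N (drop i w)) (take N (drop i v)) * wd (drop (i + N) w) (drop (i + N) v))"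
  by (simp add: tens_def add.commute)

lemma S_i_tspace:
  assumes im: "i + N \<le> m"
  shows "S_i N R m i f \<in> tspace m"
  unfolding tspace_def
proof (intro CollectI allI impI)
  fix v :: "'a list" assume v: "length v \<noteq> m"
  show "S_i N R m i f v = 0"
    unfolding S_i_def lin_ext_def
  proof (intro sum.neutral ballI)
    fix w :: "'a list" assume w: "w \<in> {w. length w = m}"
    have "wd (take i w) (take i v) * (S_img R (take N (drop i w)) (take N (drop i v))
        * wd (drop (i + N) w) (drop (i + N) v)) = 0"
    proof (rule ccontr)
      assume "\<not> ?thesis"
      hence a: "S_img R (take N (drop i w)) (take N (drop i v)) \<noteq> 0" "drop (i + N) v = drop (i + N) w"
        by (auto simp: wd_def split: if_splits)
      have "length (take N (drop i v)) = N"
        using tspace_length[OF S_img_tspace a(1)] w im by simp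
      moreover have "N \<ge> 2" using RP by (simp add: reduced_hom_pres_def)
      ultimately have "length v \<ge> i + N" by (simp add: min_def split: if_splits)
      moreover have "length (drop (i + N) v) = m - (i + N)" using a(2) w by simp
      ultimately show False using v im by auto
    qed
    thus "f w * tens i (wd (take i w)) (tens N (S_img R (take N (drop i w))) (wd (drop (i + N) w))) v = 0"
      unfolding S_i_basis_apply by simp
  qed
qed

lemma S_i_apply_split:
  assumes im: "i + N \<le> m" and u: "length u = i" and y: "length y = N" and z: "length z = m - i - N"
  shows "S_i N R m i f (u @ y @ z) = S_op N R (slice N u z f) y"
proof -
  let ?img = "\<lambda>w. tens i (wd (take i w)) (tens N (S_img R (take N (drop i w))) (wd (drop (i + N) w)))"
  define G where "G w = f w * ?img w (u @ y @ z)" for w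
  have Geq: "G w = f w * (wd (take i w) u * (S_img R (take N (drop i w)) y * wd (drop (i + N) w) z))" for w
    unfolding G_def S_i_basis_apply using u y by simp
  have inj: "inj_on (\<lambda>x. u @ x @ z) {x. length x = N}" by (rule inj_onI) simp
  have sub: "(\<lambda>x. u @ x @ z) ` {x. length x = N} \<subseteq> {w. length w = m}" using u z im by auto
  have "S_i N R m i f (u @ y @ z) = (\<Sum>w\<in>{w. length w = m}. G w)"
    unfolding S_i_def lin_ext_def G_def by simp
  also have "\<dots> = (\<Sum>w\<in>(\<lambda>x. u @ x @ z) ` {x. length x = N}. G w)"
  proof (rule sum.mono_neutral_right[OF finite_words_length sub], rule ballI)
    fix w assume w: "w \<in> {w. length w = m} - (\<lambda>x. u @ x @ z) ` {x. length x = N}"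
    show "G w = 0"
    proof (rule ccontr)
      assume "G w \<noteq> 0"
      hence "take i w = u" "drop (i + N) w = z" unfolding Geq by (auto simp: wd_def split: if_splits)
      hence "w \<in> (\<lambda>x. u @ x @ z) ` {x. length x = N}"
        using word_split3[of w m i N] w im by (metis (mono_tags) image_eqI mem_Collect_eq DiffD1)
      thus False using w by blast
    qed
  qed
  also have "\<dots> = (\<Sum>x\<in>{x. length x = N}. slice N u z f x * S_img R x y)"
    unfolding sum.reindex[OF inj] using u by (intro sum.cong refl) (simp add: Geq slice_def wd_def)
  also have "\<dots> = S_op N R (slice N u z f) y" by (simp add: S_op_apply)
  finally show ?thesis .
qed

lemma slice_S_i:
  assumes im: "i + N \<le> m" and u: "length u = i" and z: "length z = m - i - N"
  shows "slice N u z (S_i N R m i f) = S_op N R (slice N u z f)"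
proof
  fix x
  show "slice N u z (S_i N R m i f) x = S_op N R (slice N u z f) x"
    using S_i_apply_split[OF im u _ z] S_op_tspace by (simp add: slice_def tspace_def)
qed

lemma kerop_S_i:
  assumes im: "i + N \<le> m"
  shows "kerop m (S_i N R m i) = slice_space m i N (lin_span R)"
proof (intro set_eqI iffI)
  fix f assume "f \<in> kerop m (S_i N R m i)"
  hence f: "f \<in> tspace m" "S_i N R m i f = (\<lambda>_. 0)" by (auto simp: kerop_def)
  have "slice N u z f \<in> lin_span R" if u: "length u = i" and z: "length z = m - i - N" for u z
  proof -
    have "S_op N R (slice N u z f) = slice N u z (S_i N R m i f)" using slice_S_i[OF im u z] by simp
    also have "\<dots> = (\<lambda>_. 0)" using f(2) by (simp add: slice_def)
    finally show ?thesis using S_op_eq_zero_iff[OF slice_tspace] by simp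
  qed
  thus "f \<in> slice_space m i N (lin_span R)" using f(1) by (simp add: slice_space_def)
next
  fix f assume f: "f \<in> slice_space m i N (lin_span R)"
  have "S_i N R m i f = (\<lambda>_. 0)"
  proof (rule tspace_eq_by_split3[OF im S_i_tspace[OF im] lin_closed_zero[OF lin_closed_tspace]])
    fix u y z :: "'a list" assume u: "length u = i" and y: "length y = N" and z: "length z = m - i - N"
    have "S_op N R (slice N u z f) = (\<lambda>_. 0)"
      using f u z S_op_eq_zero_iff[OF slice_tspace] by (simp add: slice_space_def)
    thus "S_i N R m i f (u @ y @ z) = 0" using S_i_apply_split[OF im u y z] by simp
  qed
  thus "f \<in> kerop m (S_i N R m i)" using f by (simp add: kerop_def slice_space_def)
qed

lemma S_i_wd_apply_split:
  assumes im: "i + N \<le> m" and lw: "length w = m"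
    and u: "length u = i" and y: "length y = N" and z: "length z = m - i - N"
  shows "S_i N R m i (wd w) (u @ y @ z)
       = (if u = take i w \<and> z = drop (i + N) w then S_img R (take N (drop i w)) y else 0)"
  unfolding S_i_apply_split[OF im u y z] slice_wd[OF lw im u z]
  using S_op_wd word_split3[OF lw im] by (simp add: S_op_def lin_ext_zero)

text \<open>S_i^{(m)} replaces the factor y0 = lm f of a word u y0 z by u (lm f - f) z, and the
  lower words of f give lexicographically smaller words.\<close>

lemma S_i_wd_triangular:
  assumes im: "i + N \<le> m" and lw: "length w = m"
  shows "S_i N R m i (wd w) = wd w \<or> (\<forall>v. S_i N R m i (wd w) v \<noteq> 0 \<longrightarrow> v < w)"
proof -
  note sw = word_split3[OF lw im]
  define y0 where "y0 = take N (drop i w)"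
  show ?thesis
  proof (cases "\<exists>f\<in>R. lm f = y0")
    case False
    have "S_i N R m i (wd w) = wd w"
    proof (rule tspace_eq_by_split3[OF im S_i_tspace[OF im] wd_tspace[OF lw]])
      fix u y z :: "'a list" assume u: "length u = i" and y: "length y = N" and z: "length z = m - i - N"
      have "u @ y @ z = w \<longleftrightarrow> u = take i w \<and> y = y0 \<and> z = drop (i + N) w"
        using u y sw unfolding y0_def by (metis append_eq_append_conv)
      thus "S_i N R m i (wd w) (u @ y @ z) = wd w (u @ y @ z)"
        using S_i_wd_apply_split[OF im lw u y z] S_img_not_lm[OF False] unfolding y0_def
        by (auto simp: wd_def)
    qed
    thus ?thesis by simp
  next
    case True
    then obtain f0 where f0: "f0 \<in> R" "lm f0 = y0" by blast
    have "v < w" if ne: "S_i N R m i (wd w) v \<noteq> 0" for v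
    proof -
      have "length v = m" using ne S_i_tspace[OF im] by (auto simp: tspace_def)
      note sv = word_split3[OF this im]
      let ?u = "take i v" and ?y = "take N (drop i v)" and ?z = "drop (i + N) v"
      have ne': "(if ?u = take i w \<and> ?z = drop (i + N) w then S_img R y0 ?y else 0) \<noteq> 0"
        using ne S_i_wd_apply_split[OF im lw sv(2-4)] sv(1) unfolding y0_def by simp
      hence uz: "?u = take i w" "?z = drop (i + N) w" and "S_img R y0 ?y \<noteq> 0"
        by (auto split: if_splits)
      hence "wd y0 ?y - f0 ?y \<noteq> 0" using S_img_lm[OF f0(1)] f0(2) by simp
      moreover have "f0 y0 = 1" using lm_relation(1)[OF f0(1)] f0(2) by simp
      ultimately have "?y \<noteq> y0" "f0 ?y \<noteq> 0" by (auto simp: wd_def split: if_splits)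
      hence "?y < y0" using lm_relation(3)[OF f0(1)] f0(2) by fastforce
      hence "?u @ ?y @ ?z < ?u @ y0 @ ?z"
        using sv(3) sw(3) unfolding y0_def by (intro less_append_middle) auto
      thus "v < w" using sv(1) sw(1) uz unfolding y0_def by metis
    qed
    thus ?thesis by blast
  qed
qed

lemma red_op_S_i:
  assumes im: "i + N \<le> m"
  shows "is_red_op m (S_i N R m i)"
  unfolding is_red_op_def
proof (intro conjI ballI allI impI)
  fix f :: "'a list \<Rightarrow> 'k"
  show "S_i N R m i f \<in> tspace m" by (rule S_i_tspace[OF im])
next
  fix f g :: "'a list \<Rightarrow> 'k"
  show "S_i N R m i (\<lambda>v. f v + g v) = (\<lambda>v. S_i N R m i f v + S_i N R m i g v)"
    unfolding S_i_def by (rule lin_ext_add)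
next
  fix c and f :: "'a list \<Rightarrow> 'k"
  show "S_i N R m i (\<lambda>v. c * f v) = (\<lambda>v. c * S_i N R m i f v)"
    unfolding S_i_def by (rule lin_ext_smult)
next
  fix f :: "'a list \<Rightarrow> 'k"
  show "S_i N R m i (S_i N R m i f) = S_i N R m i f"
  proof (rule tspace_eq_by_split3[OF im S_i_tspace[OF im] S_i_tspace[OF im]])
    fix u y z :: "'a list" assume u: "length u = i" and y: "length y = N" and z: "length z = m - i - N"
    show "S_i N R m i (S_i N R m i f) (u @ y @ z) = S_i N R m i f (u @ y @ z)"
      using S_i_apply_split[OF im u y z] slice_S_i[OF im u z] S_op_idem[OF slice_tspace] by simp
  qed
next
  fix w :: "'a list" assume "length w = m"
  thus "S_i N R m i (wd w) = wd w \<or> (\<forall>v. S_i N R m i (wd w) v \<noteq> 0 \<longrightarrow> v < w)"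
    by (rule S_i_wd_triangular[OF im])
qed

end

section \<open>The operators F_1 and F_2\<close>

lemma lN_add_two: "lN N (n + 2) = lN N n + N"
  by (simp add: lN_def)

lemma le_lN_Suc:
  assumes "1 \<le> n"
  shows "N \<le> lN N (n + 1)"
proof -
  have "1 * N \<le> (n + 1) div 2 * N" using assms by (intro mult_le_mono1) simp
  also have "\<dots> \<le> lN N (n + 1)" by (simp add: lN_def)
  finally show ?thesis by simp
qed

context reduced_presentation
begin

lemma IR_eq_subsp_sum_list:
  assumes "N \<le> j"
  shows "IR N R j = subsp_sum_list (map (\<lambda>i. slice_space j i N (lin_span R)) [0..<j - N + 1])"
proof -
  have X: "tsubspace N (lin_span R)" by (rule tsubspace_lin_span[OF relations_tspace])
  have "IR N R j = lin_span (\<Union>i\<in>{0..j - N}. tensp i (tspace i) (tensp N (lin_span R) (tspace (j - N - i))))"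
    using assms by (simp add: IR_def)
  also have "(\<Union>i\<in>{0..j - N}. tensp i (tspace i) (tensp N (lin_span R) (tspace (j - N - i))))
      = (\<Union>i\<in>{0..j - N}. slice_space j i N (lin_span R))"
    using assms by (intro SUP_cong refl tensp_sandwich[OF X]) auto
  also have "(\<Union>i\<in>{0..j - N}. slice_space j i N (lin_span R))
      = \<Union> (set (map (\<lambda>i. slice_space j i N (lin_span R)) [0..<j - N + 1]))"
  proof -
    have "set [0..<j - N + 1] = {0..j - N}" by auto
    thus ?thesis by (simp only: set_map)
  qed
  also have "lin_span \<dots> = subsp_sum_list (map (\<lambda>i. slice_space j i N (lin_span R)) [0..<j - N + 1])"
    by (rule lin_span_Union_eq_subsp_sum_list)
      (auto intro: tsubspace_slice_space lin_closed_lin_span)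
  finally show ?thesis .
qed

lemma tensp_IR_eq_subsp_sum_list:
  assumes "lN N (n + 2) \<le> m"
  shows "tensp (m - lN N n) (IR N R (m - lN N n)) (tspace (lN N n))
       = subsp_sum_list (map (\<lambda>i. slice_space m i N (lin_span R)) [0..<m - lN N (n + 2) + 1])"
proof -
  define j where "j = m - lN N n"
  have jN: "N \<le> j" and jl: "j + lN N n = m" and e: "m - lN N (n + 2) = j - N"
    using assms lN_add_two[of N n] unfolding j_def by auto
  have sub: "\<forall>W \<in> set (map (\<lambda>i. slice_space j i N (lin_span R)) [0..<j - N + 1]). tsubspace j W"
    by (auto intro: tsubspace_slice_space lin_closed_lin_span)
  hence "tsubspace j (IR N R j)"
    unfolding IR_eq_subsp_sum_list[OF jN] by (intro tsubspace_subsp_sum_list) auto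
  hence "tensp j (IR N R j) (tspace (lN N n)) = slice_space m 0 j (IR N R j)"
    using tensp_tspace_right[of j "IR N R j" "lN N n"] jl by simp
  also have "\<dots> = subsp_sum_list (map (slice_space m 0 j) (map (\<lambda>i. slice_space j i N (lin_span R)) [0..<j - N + 1]))"
    unfolding IR_eq_subsp_sum_list[OF jN] using slice_space_subsp_sum_list[OF _ sub, of "lN N n"] jl by simp
  also have "map (slice_space m 0 j) (map (\<lambda>i. slice_space j i N (lin_span R)) [0..<j - N + 1])
      = map (\<lambda>i. slice_space m i N (lin_span R)) [0..<j - N + 1]"
    unfolding map_map o_def using jN jl by (intro map_cong refl) (auto simp: slice_space_nested)
  finally show ?thesis unfolding e j_def .
qed

lemma J_eq_INTER:
  assumes "1 \<le> n"
  shows "J N R (n + 1) = (\<Inter>i\<in>{0..lN N (n + 1) - N}. slice_space (lN N (n + 1)) i N (lin_span R))"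
proof (cases "n = 1")
  case True
  hence "lN N (n + 1) = N" by (simp add: lN_def)
  thus ?thesis using True slice_space_self[OF lin_span_least[OF lin_closed_tspace relations_tspace]]
    by (simp add: J_def)
next
  case False
  have X: "tsubspace N (lin_span R)" by (rule tsubspace_lin_span[OF relations_tspace])
  have "J N R (n + 1) = (\<Inter>i\<in>{0..lN N (n + 1) - N}.
      tensp i (tspace i) (tensp N (lin_span R) (tspace (lN N (n + 1) - N - i))))"
    using assms False by (simp add: J_def)
  also have "\<dots> = (\<Inter>i\<in>{0..lN N (n + 1) - N}. slice_space (lN N (n + 1)) i N (lin_span R))"
    using le_lN_Suc[OF assms, of N] by (intro INF_cong refl tensp_sandwich[OF X]) auto
  finally show ?thesis .
qed

lemma tensp_J_eq_INTER:
  assumes "1 \<le> n" "lN N (n + 1) \<le> m"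
  shows "tensp (m - lN N (n + 1)) (tspace (m - lN N (n + 1))) (J N R (n + 1))
       = (\<Inter>i\<in>{m - lN N (n + 1)..m - N}. slice_space m i N (lin_span R))"
proof -
  define L where "L = lN N (n + 1)"
  define a where "a = m - L"
  have LN: "N \<le> L" and aL: "a + L = m" using le_lN_Suc[OF assms(1)] assms(2) unfolding L_def a_def by auto
  have J: "J N R (n + 1) = (\<Inter>i\<in>{0..L - N}. slice_space L i N (lin_span R))"
    unfolding L_def by (rule J_eq_INTER[OF assms(1)])
  have "tsubspace L (J N R (n + 1))"
    unfolding J by (intro tsubspace_INTER tsubspace_slice_space lin_closed_lin_span) auto
  hence "tensp a (tspace a) (J N R (n + 1)) = slice_space m a L (J N R (n + 1))"
    using tensp_tspace_left[of L "J N R (n + 1)" a] aL by simp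
  also have "\<dots> = (\<Inter>i\<in>{0..L - N}. slice_space m (a + i) N (lin_span R))"
  proof -
    have "slice_space m a L (slice_space L i N (lin_span R)) = slice_space m (a + i) N (lin_span R)"
      if "i \<in> {0..L - N}" for i
      using that LN aL by (intro slice_space_nested) auto
    thus ?thesis unfolding J by (subst slice_space_INTER) (auto intro: INF_cong)
  qed
  also have "\<dots> = \<Inter> ((\<lambda>i. slice_space m i N (lin_span R)) ` (\<lambda>i. a + i) ` {0..L - N})"
    by (simp only: image_image)
  also have "(\<lambda>i. a + i) ` {0..L - N} = {a..m - N}"
    using LN aL by (auto simp: image_iff intro!: exI[of _ "x - a" for x])
  finally show ?thesis unfolding a_def L_def .
qed

lemma F1_eq_big_meet:
  assumes m: "lN N (n + 2) \<le> m" and f: "f \<in> tspace m"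
  shows "F1 N R n m f = big_meet m (map (S_i N R m) [0..<m - lN N (n + 2) + 1]) f"
proof -
  let ?is = "[0..<m - lN N (n + 2) + 1]"
  let ?K = "subsp_sum_list (map (\<lambda>i. slice_space m i N (lin_span R)) ?is)"
  have im: "\<forall>i \<in> set ?is. i + N \<le> m" using m lN_add_two[of N n] by auto
  have K: "tsubspace m ?K"
    by (intro tsubspace_subsp_sum_list) (auto intro: tsubspace_slice_space lin_closed_lin_span)
  have F1: "is_red_op m (F1 N R n m) \<and> kerop m (F1 N R n m) = ?K"
    using theta_inv_props[OF K] unfolding F1_def tensp_IR_eq_subsp_sum_list[OF m] .
  have "map (S_i N R m) ?is \<noteq> []" "\<forall>T \<in> set (map (S_i N R m) ?is). is_red_op m T"
    using red_op_S_i im by auto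
  note meet = big_meet_props[OF this]
  have kers: "map (kerop m) (map (S_i N R m) ?is) = map (\<lambda>i. slice_space m i N (lin_span R)) ?is"
    unfolding map_map o_def by (intro map_cong refl kerop_S_i) (use im in blast)
  have "kerop m (F1 N R n m) = kerop m (big_meet m (map (S_i N R m) ?is))"
    unfolding conjunct2[OF F1] conjunct2[OF meet] kers ..
  thus ?thesis by (rule red_op_unique[OF conjunct1[OF F1] conjunct1[OF meet] _ f])
qed

lemma F2_eq_big_join:
  assumes n: "1 \<le> n" and m: "lN N (n + 1) \<le> m" and f: "f \<in> tspace m"
  shows "F2 N R n m f = big_join m (map (S_i N R m) [m - lN N (n + 1)..<m - N + 1]) f"
proof -
  let ?is = "[m - lN N (n + 1)..<m - N + 1]"
  let ?K = "\<Inter>i\<in>{m - lN N (n + 1)..m - N}. slice_space m i N (lin_span R)"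
  have LN: "N \<le> lN N (n + 1)" by (rule le_lN_Suc[OF n])
  have im: "\<forall>i \<in> set ?is. i + N \<le> m" using m LN by auto
  have K: "tsubspace m ?K"
    using m LN by (intro tsubspace_INTER tsubspace_slice_space lin_closed_lin_span) auto
  have F2: "is_red_op m (F2 N R n m) \<and> kerop m (F2 N R n m) = ?K"
    using theta_inv_props[OF K] m unfolding F2_def tensp_J_eq_INTER[OF n m] by simp
  have "map (S_i N R m) ?is \<noteq> []" "\<forall>T \<in> set (map (S_i N R m) ?is). is_red_op m T"
    using red_op_S_i im m LN by auto
  note join = big_join_props[OF this]
  have indices: "set ?is = {m - lN N (n + 1)..m - N}" using m LN by auto
  have kers: "kerop m ` set (map (S_i N R m) ?is) = (\<lambda>i. slice_space m i N (lin_span R)) ` {m - lN N (n + 1)..m - N}"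
    unfolding set_map image_image by (rule image_cong[OF indices kerop_S_i]) (use im indices in blast)
  have "kerop m (F2 N R n m) = kerop m (big_join m (map (S_i N R m) ?is))"
    unfolding conjunct2[OF F2] conjunct2[OF join] kers ..
  thus ?thesis by (rule red_op_unique[OF conjunct1[OF F2] conjunct1[OF join] _ f])
qed

end

theorem lemma4p1p3:
  fixes R :: "('a::{finite,linorder} list \<Rightarrow> 'k::field) set" and N :: nat
  assumes "reduced_hom_pres N R"
  shows "(\<forall>n m. lN N (n + 2) \<le> m \<longrightarrow>
            (\<forall>f\<in>tspace m. F1 N R n m f =
               big_meet m (map (S_i N R m) [0..<m - lN N (n + 2) + 1]) f))
       \<and> (\<forall>n m. 1 \<le> n \<longrightarrow> lN N (n + 1) \<le> m \<longrightarrow>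
            (\<forall>f\<in>tspace m. F2 N R n m f =
               big_join m (map (S_i N R m) [m - lN N (n + 1)..<m - N + 1]) f))"
proof -
  interpret reduced_presentation R N by (rule reduced_presentation.intro[OF assms])
  show ?thesis using F1_eq_big_meet F2_eq_big_join by blast
qed

end
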